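(* Let $\Gamma$ be a homogeneous rooted metric tree with root $o$, edge length $1$ and branching number $b\geq 2$, and let $$\lambda_b := \left(\arccos \frac{1}{R_b}\right)^2,\qquad R_b:=\frac{b^{1/2}+b^{-1/2}}{2}.$$ Let $\psi$ be a measurable, non-negative function on $\mathbb{R}_+$. Then there exists a constant $C(b,\psi)<\infty$ such that $$\int_{\Gamma} \psi(|x|)\, |u(x)|^2 \, dx \leq C(b,\psi) \int_{\Gamma} \left( |u'(x)|^2 - \lambda_b |u(x)|^2\right) dx \quad\text{for all } u \in C_0^\infty(\Gamma_o)$$ if and only if $$\sup_{r>0}\, (1 + r)^{-1} \int_0^r \psi(t)\, (1+t)^2 \, dt < \infty .$$
   Context: $\Gamma$ is a rooted metric tree with root $o$; $|x|$ is the distance from $x$ to $o$ along the tree. Homogeneous means: the root has exactly one emanating edge, every other vertex has the same number $b$ of emanating (forward) edges, and all edges have length $1$. Equivalently, the number of points $x\in\Gamma$ with $|x|=t$ equals $b^j$ for $j<t\le j+1$, $j\in\{0,1,2,\dots\}$. ($\lambda_b$ is the bottom of the spectrum of the Neumann Laplacian on $\Gamma$.) $\Gamma_o:=\Gamma\cup\{o\}$ and $C_0^\infty(\Gamma_o)$ denotes continuous functions on $\Gamma_o$ that are infinitely smooth on each edge and whose support is a bounded subset of $\Gamma_o$; they need not vanish at $o$. Integrals over $\Gamma$ are with respect to arc length and $u'$ is the derivative along edges. *)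

theory Defs
  imports "HOL-Analysis.Analysis"
begin

text \<open>The edges of generation j (points x with j < |x| <= j+1) are indexed by words
  w of length j over the alphabet {0..<b}; a point of Gamma is a pair (w, s) with
  s in [0,1], and |x| = length w + s. The endpoint s = 1 of edge w is the vertex
  from which the edges w @ [k], k < b, emanate (at their s = 0).
  The root o is the point s = 0 of the edge [].\<close>

definition tree_edges :: "nat \<Rightarrow> nat \<Rightarrow> nat list set" where
  "tree_edges b j = {w. length w = j \<and> (\<forall>k\<in>set w. k < b)}"

definition smooth_on_unit :: "(real \<Rightarrow> real) \<Rightarrow> bool" where
  "smooth_on_unit f \<longleftrightarrow> (\<exists>D :: nat \<Rightarrow> real \<Rightarrow> real. D 0 = f \<and>
     (\<forall>n. \<forall>x\<in>{0..1}. (D n has_real_derivative D (Suc n) x) (at x within {0..1})))"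

text \<open>C_0^infinity(Gamma_o): continuous on Gamma_o, smooth on each edge, bounded support
  (need not vanish at the root).\<close>
definition tree_C0inf :: "nat \<Rightarrow> (nat list \<Rightarrow> real \<Rightarrow> real) \<Rightarrow> bool" where
  "tree_C0inf b u \<longleftrightarrow>
     (\<forall>j. \<forall>w\<in>tree_edges b j. smooth_on_unit (u w)) \<and>
     (\<forall>j. \<forall>w\<in>tree_edges b j. \<forall>k<b. u (w @ [k]) 0 = u w 1) \<and>
     (\<exists>N. \<forall>j\<ge>N. \<forall>w\<in>tree_edges b j. \<forall>s\<in>{0..1}. u w s = 0)"

definition tree_nn_integral :: "nat \<Rightarrow> (nat list \<Rightarrow> real \<Rightarrow> ennreal) \<Rightarrow> ennreal" where
  "tree_nn_integral b f =
     (\<Sum>j. \<Sum>w\<in>tree_edges b j. set_nn_integral lborel {0..1} (f w))"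

definition tree_integral :: "nat \<Rightarrow> (nat list \<Rightarrow> real \<Rightarrow> real) \<Rightarrow> real" where
  "tree_integral b f = (\<Sum>j. \<Sum>w\<in>tree_edges b j. integral {0..1} (f w))"

definition R_b :: "nat \<Rightarrow> real" where
  "R_b b = (sqrt (real b) + 1 / sqrt (real b)) / 2"

definition lambda_b :: "nat \<Rightarrow> real" where
  "lambda_b b = (arccos (1 / R_b b))\<^sup>2"

end

theory Submission
  imports Defs
begin

text \<open>
  With k = arccos (1 / R_b) we have lambda_b = k^2, and the bottom of the spectrum is realised by an
  explicit positive radial ground state: on the edges of generation j,
  phi_j(s) = b^(-j/2) ((1 + j sin k) sin (k (1 - s)) + b^(-1/2) (1 + (j + 1) sin k) sin (k s)).
  It solves -phi'' = lambda_b phi, is continuous at the vertices, satisfies the Kirchhoff condition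
  there and the Neumann condition at the root, and b^j phi_j^2 is comparable to (1 + j)^2.
  Integrating by parts against rho = phi' / phi gives the ground state representation
  Q[u] = sum over edges of the integral of (u' - rho u)^2 = phi^2 |(u / phi)'|^2, so with u = phi g
  the inequality becomes a one-dimensional Hardy inequality for g with weight comparable to
  (1 + |x|)^2, for which sup_r (1 + r)^(-1) int_0^r psi (1 + t)^2 < infinity is the
  Muckenhoupt-type criterion. Sufficiency follows from a discrete weighted Hardy inequality for the
  vertex averages of (u / phi)^2; necessity from testing with phi times a radial cutoff that equals
  1 up to generation n, vanishes from generation 2n + 1 on, and has energy O(n).
\<close>

section \<open>The ground state\<close>

definition tree_freq :: "nat \<Rightarrow> real" where
  "tree_freq b = arccos (1 / R_b b)"

definition tree_decay :: "nat \<Rightarrow> real" where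
  "tree_decay b = 1 / sqrt (real b)"

definition tree_amp :: "nat \<Rightarrow> nat \<Rightarrow> real" where
  "tree_amp b j = 1 + real j * sin (tree_freq b)"

lemma lambda_b_eq: "lambda_b b = (tree_freq b)\<^sup>2"
  unfolding lambda_b_def tree_freq_def ..

definition tree_freq_cos :: "nat \<Rightarrow> real" where
  "tree_freq_cos b = 2 * sqrt (real b) / (real b + 1)"

lemma tree_freq_eq: "0 < b \<Longrightarrow> tree_freq b = arccos (tree_freq_cos b)"
  unfolding tree_freq_def R_b_def tree_freq_cos_def by (simp add: field_simps)

lemma tree_freq_cos_bounds:
  assumes "1 \<le> b"
  shows "0 < tree_freq_cos b" "tree_freq_cos b \<le> 1" "2 \<le> b \<Longrightarrow> tree_freq_cos b < 1"
proof -
  have "0 \<le> (sqrt (real b) - 1)\<^sup>2" "2 \<le> b \<Longrightarrow> 0 < (sqrt (real b) - 1)\<^sup>2" by simp_all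
  then have "2 * sqrt (real b) \<le> real b + 1" "2 \<le> b \<Longrightarrow> 2 * sqrt (real b) < real b + 1"
    by (simp_all add: power2_eq_square algebra_simps)
  then show "0 < tree_freq_cos b" "tree_freq_cos b \<le> 1" "2 \<le> b \<Longrightarrow> tree_freq_cos b < 1"
    using assms by (simp_all add: tree_freq_cos_def)
qed

lemma cos_tree_freq: "1 \<le> b \<Longrightarrow> cos (tree_freq b) = tree_freq_cos b"
  using tree_freq_cos_bounds[of b] by (simp add: tree_freq_eq)

lemma sin_tree_freq:
  assumes "1 \<le> b" shows "sin (tree_freq b) = (real b - 1) / (real b + 1)"
proof -
  have "sin (tree_freq b) = sqrt (1 - (tree_freq_cos b)\<^sup>2)"
    using tree_freq_cos_bounds[OF assms] assms by (simp add: tree_freq_eq sin_arccos_abs)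
  also have "1 - (tree_freq_cos b)\<^sup>2 = ((real b - 1) / (real b + 1))\<^sup>2"
    unfolding tree_freq_cos_def
    by (simp add: power_divide field_simps) (simp add: power2_eq_square algebra_simps)
  finally show ?thesis using assms by simp
qed

lemma tree_freq_bounds:
  assumes "2 \<le> b" shows "0 < tree_freq b" "tree_freq b < pi / 2"
proof -
  have "arccos 1 < arccos (tree_freq_cos b)" "arccos (tree_freq_cos b) < arccos 0"
    using tree_freq_cos_bounds[of b] assms by (intro arccos_less_arccos; simp)+
  moreover have "tree_freq b = arccos (tree_freq_cos b)" using assms by (simp add: tree_freq_eq)
  ultimately show "0 < tree_freq b" "tree_freq b < pi / 2" by (simp_all only: arccos_1 arccos_0)
qed

lemma sin_tree_freq_bounds: "2 \<le> b \<Longrightarrow> 0 < sin (tree_freq b) \<and> sin (tree_freq b) < 1"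
  by (simp add: sin_tree_freq)

lemma tree_decay_bounds: "2 \<le> b \<Longrightarrow> 0 < tree_decay b \<and> tree_decay b < 1"
  by (simp add: tree_decay_def)

lemma real_mult_tree_decay_sq: "0 < b \<Longrightarrow> real b * (tree_decay b)\<^sup>2 = 1"
  by (simp add: tree_decay_def power_divide)

lemma cos_tree_freq_decay:
  assumes "1 \<le> b" shows "cos (tree_freq b) * (tree_decay b + 1 / tree_decay b) = 2"
proof -
  define r where "r = sqrt (real b)"
  have "real b = r * r" "0 < r" using assms by (simp_all add: r_def)
  moreover from this have "r + r * (r * r) \<noteq> 0" by (metis add_pos_pos mult_pos_pos less_irrefl)
  ultimately show ?thesis using assms
    by (simp add: cos_tree_freq tree_freq_cos_def tree_decay_def r_def[symmetric] field_simps)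
qed

lemma tree_decay_mult_one_plus_sin:
  assumes "1 \<le> b" shows "tree_decay b * (1 + sin (tree_freq b)) = cos (tree_freq b)"
proof -
  define r where "r = sqrt (real b)"
  have "real b = r * r" "0 < r" using assms by (simp_all add: r_def)
  then show ?thesis using assms
    by (simp add: cos_tree_freq sin_tree_freq tree_freq_cos_def tree_decay_def r_def[symmetric] field_simps)
qed

definition ground_state :: "nat \<Rightarrow> nat \<Rightarrow> real \<Rightarrow> real" where
  "ground_state b j s = tree_decay b ^ j *
     (tree_amp b j * sin (tree_freq b * (1 - s)) + tree_decay b * tree_amp b (Suc j) * sin (tree_freq b * s))"

definition ground_state_deriv :: "nat \<Rightarrow> nat \<Rightarrow> real \<Rightarrow> real" where
  "ground_state_deriv b j s = tree_decay b ^ j * tree_freq b *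
     (- tree_amp b j * cos (tree_freq b * (1 - s)) + tree_decay b * tree_amp b (Suc j) * cos (tree_freq b * s))"

lemma has_real_derivative_ground_state:
  "(ground_state b j has_real_derivative ground_state_deriv b j s) (at s within S)"
  unfolding ground_state_def ground_state_deriv_def
  by (auto intro!: derivative_eq_intros simp: algebra_simps)

lemma has_real_derivative_ground_state_deriv:
  "(ground_state_deriv b j has_real_derivative - lambda_b b * ground_state b j s) (at s within S)"
  unfolding ground_state_def ground_state_deriv_def lambda_b_eq
  by (auto intro!: derivative_eq_intros simp: algebra_simps power2_eq_square)

lemma continuous_on_ground_state: "continuous_on S (ground_state b j)"
  using has_real_derivative_ground_state by (intro DERIV_continuous_on) blast

lemma continuous_on_ground_state_deriv: "continuous_on S (ground_state_deriv b j)"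
  using has_real_derivative_ground_state_deriv by (intro DERIV_continuous_on) blast

lemma ground_state_vertex: "ground_state b j 1 = ground_state b (Suc j) 0"
  unfolding ground_state_def by simp

lemma ground_state_deriv_vertex:
  assumes "1 \<le> b" shows "ground_state_deriv b j 1 = real b * ground_state_deriv b (Suc j) 0"
proof -
  define k where "k = tree_freq b"
  define q where "q = tree_decay b"
  define c where "c = cos (tree_freq b)"
  define a where "a = tree_amp b"
  have q: "q > 0" using assms by (simp add: q_def tree_decay_def)
  have bq: "real b * q = 1 / q"
    using real_mult_tree_decay_sq[of b] q assms by (simp add: q_def field_simps power2_eq_square)
  have "a j + a (Suc (Suc j)) = 2 * a (Suc j)"
    by (simp add: a_def tree_amp_def algebra_simps)
  then have "a j + a (Suc (Suc j)) = c * (q + 1 / q) * a (Suc j)"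
    using cos_tree_freq_decay[OF assms] by (simp add: c_def q_def)
  then have key: "- a j + q * a (Suc j) * c = (1 / q) * (- a (Suc j) * c + q * a (Suc (Suc j)))"
    using q by (simp add: field_simps)
  have "ground_state_deriv b j 1 = q ^ j * k * (- a j + q * a (Suc j) * c)"
    by (simp add: ground_state_deriv_def k_def q_def c_def a_def)
  also have "\<dots> = q ^ j * k * ((real b * q) * (- a (Suc j) * c + q * a (Suc (Suc j))))"
    unfolding key bq ..
  also have "\<dots> = real b * ground_state_deriv b (Suc j) 0"
    by (simp add: ground_state_deriv_def k_def q_def c_def a_def algebra_simps)
  finally show ?thesis .
qed

lemma ground_state_deriv_root: "1 \<le> b \<Longrightarrow> ground_state_deriv b 0 0 = 0"
  using tree_decay_mult_one_plus_sin[of b] by (simp add: ground_state_deriv_def tree_amp_def)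

definition ground_state_min :: "nat \<Rightarrow> nat \<Rightarrow> real" where
  "ground_state_min b j = tree_decay b ^ Suc j * tree_amp b j * sin (tree_freq b)"

definition ground_state_max :: "nat \<Rightarrow> nat \<Rightarrow> real" where
  "ground_state_max b j = 2 * tree_decay b ^ j * tree_amp b (Suc j)"

lemma tree_amp_bounds:
  assumes "2 \<le> b"
  shows "1 \<le> tree_amp b j" "tree_amp b j \<le> tree_amp b (Suc j)" "tree_amp b j \<le> real j + 1"
    and "sin (tree_freq b) * (real j + 1) \<le> tree_amp b j" "tree_amp b (Suc j) \<le> 2 * tree_amp b j"
proof -
  have "0 < sin (tree_freq b)" "sin (tree_freq b) < 1" using sin_tree_freq_bounds[OF assms] by auto
  moreover have "real j * sin (tree_freq b) \<le> real j" "0 \<le> real j * sin (tree_freq b)"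
    using calculation by (simp_all add: mult_left_le)
  ultimately show "1 \<le> tree_amp b j" "tree_amp b j \<le> tree_amp b (Suc j)" "tree_amp b j \<le> real j + 1"
    and "sin (tree_freq b) * (real j + 1) \<le> tree_amp b j" "tree_amp b (Suc j) \<le> 2 * tree_amp b j"
    unfolding tree_amp_def of_nat_Suc by (simp_all add: algebra_simps, linarith)
qed

lemma ground_state_min_pos: "2 \<le> b \<Longrightarrow> 0 < ground_state_min b j"
  using tree_decay_bounds[of b] sin_tree_freq_bounds[of b] tree_amp_bounds(1)[of b j]
  by (simp add: ground_state_min_def)

lemma sin_add_le: 
  assumes "0 \<le> x" "x \<le> pi / 2" "0 \<le> y" "y \<le> pi / 2"
  shows "sin (x + y) \<le> sin x + sin y"
proof -
  have "sin x \<ge> 0" "sin y \<ge> 0" using assms by (auto intro!: sin_ge_zero)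
  then have "sin x * cos y \<le> sin x" "cos x * sin y \<le> sin y"
    using mult_left_mono[of "cos y" 1 "sin x"] mult_right_mono[of "cos x" 1 "sin y"] by auto
  then show ?thesis by (simp add: sin_add)
qed

lemma ground_state_ge_min:
  assumes "2 \<le> b" "0 \<le> s" "s \<le> 1"
  shows "ground_state_min b j \<le> ground_state b j s"
proof -
  define k where "k = tree_freq b"
  define q where "q = tree_decay b"
  define a where "a = tree_amp b"
  have k: "0 < k" "k < pi / 2" using tree_freq_bounds[OF assms(1)] by (auto simp: k_def)
  have q: "0 < q" "q < 1" using tree_decay_bounds[OF assms(1)] by (auto simp: q_def)
  have a: "1 \<le> a j" "a j \<le> a (Suc j)" using tree_amp_bounds[OF assms(1)] by (auto simp: a_def)
  have "k * (1 - s) \<le> k" "k * s \<le> k" using k assms by (auto intro!: mult_left_le)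
  then have ks: "k * (1 - s) \<le> pi / 2" "k * s \<le> pi / 2" using k by linarith+
  have sins: "0 \<le> sin (k * (1 - s))" "0 \<le> sin (k * s)"
    using k ks assms by (auto intro!: sin_ge_zero)
  have "sin k \<le> sin (k * (1 - s)) + sin (k * s)"
    using sin_add_le[of "k * (1 - s)" "k * s"] k ks assms by (simp add: algebra_simps)
  then have "q * a j * sin k \<le> q * a j * sin (k * (1 - s)) + q * a j * sin (k * s)"
    using q a by (simp add: distrib_left[symmetric])
  also have "\<dots> \<le> a j * sin (k * (1 - s)) + q * a (Suc j) * sin (k * s)"
    using q a sins by (intro add_mono mult_right_mono mult_left_mono) auto
  finally show ?thesis
    using q unfolding ground_state_def ground_state_min_def k_def[symmetric] q_def[symmetric] a_def[symmetric]
    by (simp add: mult_left_mono mult.assoc)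
qed

lemma ground_state_le_max:
  assumes "2 \<le> b" "0 \<le> s" "s \<le> 1"
  shows "ground_state b j s \<le> ground_state_max b j"
proof -
  define k where "k = tree_freq b"
  define q where "q = tree_decay b"
  define a where "a = tree_amp b"
  have q: "0 < q" "q < 1" using tree_decay_bounds[OF assms(1)] by (auto simp: q_def)
  have a: "1 \<le> a j" "a j \<le> a (Suc j)" using tree_amp_bounds[OF assms(1)] by (auto simp: a_def)
  have "a j * sin (k * (1 - s)) \<le> a (Suc j)"
    using a by (intro order_trans[OF mult_left_le]) auto
  moreover have "q * a (Suc j) * sin (k * s) \<le> a (Suc j)"
    using q a by (intro order_trans[OF mult_left_le] mult_left_le_one_le) auto
  ultimately show ?thesis
    using q unfolding ground_state_def ground_state_max_def k_def[symmetric] q_def[symmetric] a_def[symmetric]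
    by (simp add: mult_left_mono mult.assoc)
qed

lemma ground_state_pos: "2 \<le> b \<Longrightarrow> 0 \<le> s \<Longrightarrow> s \<le> 1 \<Longrightarrow> 0 < ground_state b j s"
  using ground_state_min_pos ground_state_ge_min less_le_trans by blast

definition ground_state_log_deriv :: "nat \<Rightarrow> nat \<Rightarrow> real \<Rightarrow> real" where
  "ground_state_log_deriv b j s = ground_state_deriv b j s / ground_state b j s"

lemma continuous_on_ground_state_log_deriv:
  "2 \<le> b \<Longrightarrow> continuous_on {0..1} (ground_state_log_deriv b j)"
  unfolding ground_state_log_deriv_def using ground_state_pos[of b]
  by (intro continuous_intros continuous_on_ground_state continuous_on_ground_state_deriv)
     (metis atLeastAtMost_iff less_irrefl)

lemma has_real_derivative_ground_state_log_deriv: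
  assumes "2 \<le> b" "s \<in> {0..1}"
  shows "(ground_state_log_deriv b j has_real_derivative
           - lambda_b b - (ground_state_log_deriv b j s)\<^sup>2) (at s within {0..1})"
proof -
  have "ground_state b j s \<noteq> 0" using ground_state_pos[of b s j] assms by auto
  then show ?thesis unfolding ground_state_log_deriv_def
    by (auto intro!: derivative_eq_intros has_real_derivative_ground_state
        has_real_derivative_ground_state_deriv simp: field_simps power2_eq_square)
qed

lemma ground_state_log_deriv_vertex:
  "1 \<le> b \<Longrightarrow> ground_state_log_deriv b j 1 = real b * ground_state_log_deriv b (Suc j) 0"
  by (simp add: ground_state_log_deriv_def ground_state_deriv_vertex ground_state_vertex)

lemma ground_state_log_deriv_root: "1 \<le> b \<Longrightarrow> ground_state_log_deriv b 0 0 = 0"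
  by (simp add: ground_state_log_deriv_def ground_state_deriv_root)

lemma ground_state_max_sq_scaled:
  assumes "2 \<le> b" shows "(ground_state_max b j)\<^sup>2 * real b ^ j \<le> 16 * (real j + 1)\<^sup>2"
proof -
  have "(ground_state_max b j)\<^sup>2 * real b ^ j = 4 * (tree_amp b (Suc j))\<^sup>2 * (real b * (tree_decay b)\<^sup>2) ^ j"
    by (simp add: ground_state_max_def power_mult_distrib power_mult[symmetric] mult_ac power2_eq_square)
  also have "\<dots> = 4 * (tree_amp b (Suc j))\<^sup>2" using assms by (simp add: real_mult_tree_decay_sq)
  also have "\<dots> \<le> 4 * (2 * (real j + 1))\<^sup>2"
    using tree_amp_bounds[OF assms, of "Suc j"] by (intro mult_left_mono power_mono) auto
  finally show ?thesis by (simp add: power2_eq_square algebra_simps)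
qed

lemma ground_state_min_sq_scaled:
  assumes "2 \<le> b"
  shows "(tree_decay b)\<^sup>2 * (sin (tree_freq b))^4 * (real j + 1)\<^sup>2 \<le> (ground_state_min b j)\<^sup>2 * real b ^ j"
proof -
  define q where "q = tree_decay b"
  define \<sigma> where "\<sigma> = sin (tree_freq b)"
  have "(ground_state_min b j)\<^sup>2 * real b ^ j = q\<^sup>2 * \<sigma>\<^sup>2 * (tree_amp b j)\<^sup>2 * (real b * q\<^sup>2) ^ j"
    by (simp add: ground_state_min_def q_def \<sigma>_def power_mult_distrib power_mult[symmetric] mult_ac power2_eq_square)
  also have "\<dots> = q\<^sup>2 * \<sigma>\<^sup>2 * (tree_amp b j)\<^sup>2" using assms by (simp add: q_def real_mult_tree_decay_sq)
  finally have eq: "(ground_state_min b j)\<^sup>2 * real b ^ j = q\<^sup>2 * \<sigma>\<^sup>2 * (tree_amp b j)\<^sup>2" .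
  have "(\<sigma> * (real j + 1))\<^sup>2 \<le> (tree_amp b j)\<^sup>2"
    using tree_amp_bounds(4)[OF assms, of j] sin_tree_freq_bounds[OF assms] by (intro power_mono) (auto simp: \<sigma>_def)
  then have "q\<^sup>2 * \<sigma>\<^sup>2 * (\<sigma> * (real j + 1))\<^sup>2 \<le> q\<^sup>2 * \<sigma>\<^sup>2 * (tree_amp b j)\<^sup>2"
    by (intro mult_left_mono) auto
  then show ?thesis unfolding eq by (simp add: q_def \<sigma>_def power_mult_distrib power4_eq_xxxx power2_eq_square mult_ac)
qed

lemma ground_state_ratio_sq:
  assumes "2 \<le> b"
  shows "(ground_state_max b j / ground_state_min b j)\<^sup>2 \<le> 16 / ((tree_decay b)\<^sup>2 * (sin (tree_freq b))\<^sup>2)"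
proof -
  define q where "q = tree_decay b"
  define \<sigma> where "\<sigma> = sin (tree_freq b)"
  have q: "0 < q" and \<sigma>: "0 < \<sigma>"
    using tree_decay_bounds[OF assms] sin_tree_freq_bounds[OF assms] by (auto simp: q_def \<sigma>_def)
  have a: "1 \<le> tree_amp b j" "tree_amp b (Suc j) \<le> 2 * tree_amp b j"
    using tree_amp_bounds[OF assms] by auto
  have "ground_state_max b j / ground_state_min b j = 2 * tree_amp b (Suc j) / (q * tree_amp b j * \<sigma>)"
    using q by (simp add: ground_state_max_def ground_state_min_def q_def \<sigma>_def field_simps)
  also have "\<dots> \<le> 2 * (2 * tree_amp b j) / (q * tree_amp b j * \<sigma>)"
    using a q \<sigma> by (intro divide_right_mono mult_left_mono) auto
  also have "\<dots> = 4 / (q * \<sigma>)" using a q \<sigma> by (simp add: field_simps)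
  finally have "ground_state_max b j / ground_state_min b j \<le> 4 / (q * \<sigma>)" .
  moreover have "0 \<le> ground_state_max b j / ground_state_min b j"
    using ground_state_min_pos[OF assms, of j] ground_state_pos[OF assms, of 1 j]
      ground_state_le_max[OF assms, of 1 j] by simp
  ultimately have "(ground_state_max b j / ground_state_min b j)\<^sup>2 \<le> (4 / (q * \<sigma>))\<^sup>2"
    by (intro power_mono)
  then show ?thesis by (simp add: q_def \<sigma>_def power_divide power_mult_distrib)
qed

section \<open>The ground state representation\<close>

lemma smooth_on_unit_C1:
  assumes "smooth_on_unit f"
  obtains f' where "continuous_on {0..1} f'" "continuous_on {0..1} f"
    "\<And>x. x \<in> {0..1} \<Longrightarrow> (f has_real_derivative f' x) (at x within {0..1})"
    "\<And>x. x \<in> {0<..<1} \<Longrightarrow> deriv f x = f' x"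
proof -
  obtain D where D0: "D 0 = f"
    and D: "\<And>n x. x \<in> {0..1} \<Longrightarrow> (D n has_real_derivative D (Suc n) x) (at x within {0..1})"
    using assms unfolding smooth_on_unit_def by blast
  have df: "(f has_real_derivative D 1 x) (at x within {0..1})" if "x \<in> {0..1}" for x
    using D[OF that, of 0] D0 by simp
  show ?thesis
  proof
    show "continuous_on {0..1} (D 1)" using D[of _ 1] by (intro DERIV_continuous_on) auto
    show "continuous_on {0..1} f" using df by (intro DERIV_continuous_on) auto
    show "(f has_real_derivative D 1 x) (at x within {0..1})" if "x \<in> {0..1}" for x
      using df[OF that] .
    show "deriv f x = D 1 x" if "x \<in> {0<..<1}" for x
      using df[of x] that by (intro DERIV_imp_deriv) (simp add: at_within_Icc_at)
  qed
qed

definition edge_defect :: "nat \<Rightarrow> nat \<Rightarrow> (real \<Rightarrow> real) \<Rightarrow> real" where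
  "edge_defect b j f = integral {0..1} (\<lambda>s. (deriv f s - ground_state_log_deriv b j s * f s)\<^sup>2)"

lemma edge_defect_eq:
  assumes "2 \<le> b" "continuous_on {0..1} f'" "continuous_on {0..1} f"
    and "\<And>x. x \<in> {0<..<1} \<Longrightarrow> deriv f x = f' x"
  shows "((\<lambda>s. (f' s - ground_state_log_deriv b j s * f s)\<^sup>2) has_integral edge_defect b j f) {0..1}"
proof -
  have "(\<lambda>s. (f' s - ground_state_log_deriv b j s * f s)\<^sup>2) integrable_on {0..1}"
    using assms by (intro integrable_continuous_interval continuous_intros continuous_on_ground_state_log_deriv)
  moreover have "integral {0..1} (\<lambda>s. (f' s - ground_state_log_deriv b j s * f s)\<^sup>2) = edge_defect b j f"
    unfolding edge_defect_def by (rule integral_spike[of "{0, 1}"]) (auto simp: assms(4))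
  ultimately show ?thesis by (metis integrable_integral)
qed

lemma edge_defect_nonneg:
  assumes "2 \<le> b" "smooth_on_unit f" shows "0 \<le> edge_defect b j f"
proof -
  obtain f' where f': "continuous_on {0..1} f'" "continuous_on {0..1} f"
    "\<And>x. x \<in> {0<..<1} \<Longrightarrow> deriv f x = f' x"
    using smooth_on_unit_C1[OF assms(2)] by metis
  have "((\<lambda>s. (f' s - ground_state_log_deriv b j s * f s)\<^sup>2) has_integral edge_defect b j f) {0..1}"
    using assms(1) f' by (rule edge_defect_eq)
  then show ?thesis by (rule has_integral_nonneg) simp
qed

lemma edge_energy_identity:
  assumes b: "2 \<le> b" and f: "smooth_on_unit f"
  shows "((\<lambda>s. (deriv f s)\<^sup>2 - lambda_b b * (f s)\<^sup>2) has_integral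
     edge_defect b j f + ground_state_log_deriv b j 1 * (f 1)\<^sup>2 - ground_state_log_deriv b j 0 * (f 0)\<^sup>2) {0..1}"
proof -
  obtain f' where f': "continuous_on {0..1} f'" "continuous_on {0..1} f"
    and df: "\<And>x. x \<in> {0..1} \<Longrightarrow> (f has_real_derivative f' x) (at x within {0..1})"
    and deriv: "\<And>x. x \<in> {0<..<1} \<Longrightarrow> deriv f x = f' x"
    using smooth_on_unit_C1[OF f] by blast
  define \<rho> where "\<rho> = ground_state_log_deriv b j"
  define G where "G s = \<rho> s * (f s)\<^sup>2" for s
  define G' where "G' s = (- lambda_b b - (\<rho> s)\<^sup>2) * (f s)\<^sup>2 + \<rho> s * (2 * f s * f' s)" for s
  have "(G has_vector_derivative G' x) (at x within {0..1})" if "x \<in> {0..1}" for x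
    unfolding has_real_derivative_iff_has_vector_derivative[symmetric] G_def G'_def \<rho>_def
    using that by (auto intro!: derivative_eq_intros has_real_derivative_ground_state_log_deriv[OF b] df)
  then have "(G' has_integral G 1 - G 0) {0..1}"
    by (intro fundamental_theorem_of_calculus) auto
  moreover have "((\<lambda>s. (f' s - \<rho> s * f s)\<^sup>2) has_integral edge_defect b j f) {0..1}"
    unfolding \<rho>_def using b f' deriv by (rule edge_defect_eq)
  ultimately have "((\<lambda>s. (f' s - \<rho> s * f s)\<^sup>2 + G' s) has_integral edge_defect b j f + (G 1 - G 0)) {0..1}"
    by (intro has_integral_add)
  then have "((\<lambda>s. (f' s)\<^sup>2 - lambda_b b * (f s)\<^sup>2) has_integral edge_defect b j f + (G 1 - G 0)) {0..1}"
    by (rule has_integral_eq[rotated]) (simp add: G'_def power2_eq_square algebra_simps)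
  moreover have "edge_defect b j f + (G 1 - G 0) = edge_defect b j f
      + ground_state_log_deriv b j 1 * (f 1)\<^sup>2 - ground_state_log_deriv b j 0 * (f 0)\<^sup>2"
    by (simp add: G_def \<rho>_def)
  ultimately have "((\<lambda>s. (f' s)\<^sup>2 - lambda_b b * (f s)\<^sup>2) has_integral edge_defect b j f
      + ground_state_log_deriv b j 1 * (f 1)\<^sup>2 - ground_state_log_deriv b j 0 * (f 0)\<^sup>2) {0..1}"
    by simp
  then show ?thesis
    by (rule has_integral_spike_finite[of "{0, 1}", rotated 2]) (simp_all add: deriv)
qed

lemma deriv_eq_0_if_vanishes:
  fixes f :: "real \<Rightarrow> real"
  assumes "\<forall>s\<in>{0..1}. f s = 0" "s \<in> {0<..<1}"
  shows "deriv f s = 0"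
proof -
  have "(f has_field_derivative 0) (at s)"
    by (rule has_field_derivative_transform_within_open[of "\<lambda>_. 0" _ _ "{0<..<1}"]) (use assms in auto)
  then show ?thesis by (rule DERIV_imp_deriv)
qed

lemma edge_defect_eq_0_if_vanishes:
  fixes f :: "real \<Rightarrow> real"
  assumes "\<forall>s\<in>{0..1}. f s = 0" shows "edge_defect b j f = 0"
proof -
  have "((\<lambda>s. (deriv f s - ground_state_log_deriv b j s * f s)\<^sup>2) has_integral 0) {0..1}"
    by (rule has_integral_spike_finite[of "{0, 1}" _ _ "\<lambda>_. 0"])
       (use assms deriv_eq_0_if_vanishes[OF assms] in auto)
  then show ?thesis unfolding edge_defect_def by (rule integral_unique)
qed

lemma integral_square_le:
  fixes h :: "real \<Rightarrow> real"
  assumes h: "continuous_on {a..b} h" and "a \<le> b"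
  shows "(integral {a..b} h)\<^sup>2 \<le> (b - a) * integral {a..b} (\<lambda>x. (h x)\<^sup>2)"
proof (cases "a = b")
  case False
  then have ab: "0 < b - a" using assms by simp
  define A where "A = integral {a..b} h"
  define c where "c = A / (b - a)"
  have cA: "- 2 * c * A + (b - a) * c\<^sup>2 = - A\<^sup>2 / (b - a)"
  proof -
    have "\<And>d. 0 < d \<Longrightarrow> - 2 * (A / d) * A + d * (A / d)\<^sup>2 = - A\<^sup>2 / d"
      by (simp add: power2_eq_square field_simps)
    then show ?thesis using ab by (simp only: c_def)
  qed
  have i1: "(\<lambda>x. (h x)\<^sup>2) integrable_on {a..b}" and i2: "(\<lambda>x. 2 * c * h x) integrable_on {a..b}"
    by (auto intro!: integrable_continuous_interval continuous_intros h)
  have "0 \<le> integral {a..b} (\<lambda>x. (h x - c)\<^sup>2)"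
    by (rule integral_nonneg) (auto intro!: integrable_continuous_interval continuous_intros h)
  also have "\<dots> = integral {a..b} (\<lambda>x. ((h x)\<^sup>2 - 2 * c * h x) + c\<^sup>2)"
    by (rule integral_cong) (simp add: power2_eq_square algebra_simps)
  also have "\<dots> = integral {a..b} (\<lambda>x. (h x)\<^sup>2) - integral {a..b} (\<lambda>x. 2 * c * h x)
      + integral {a..b} (\<lambda>x. c\<^sup>2)"
  proof -
    have "integral {a..b} (\<lambda>x. ((h x)\<^sup>2 - 2 * c * h x) + c\<^sup>2)
        = integral {a..b} (\<lambda>x. (h x)\<^sup>2 - 2 * c * h x) + integral {a..b} (\<lambda>x. c\<^sup>2)"
      using i1 i2 by (intro integral_add integrable_diff) auto
    then show ?thesis using integral_diff[OF i1 i2] by simp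
  qed
  also have "\<dots> = integral {a..b} (\<lambda>x. (h x)\<^sup>2) - A\<^sup>2 / (b - a)"
    using assms cA by (simp add: A_def)
  finally have "A\<^sup>2 / (b - a) \<le> integral {a..b} (\<lambda>x. (h x)\<^sup>2)" by simp
  then show ?thesis using ab by (simp add: A_def divide_le_eq mult.commute)
qed simp

lemma integral_square_le_unit:
  fixes h :: "real \<Rightarrow> real"
  assumes h: "continuous_on {0..1} h" and s: "s \<in> {0..1}"
  shows "(integral {0..s} h)\<^sup>2 \<le> integral {0..1} (\<lambda>x. (h x)\<^sup>2)"
proof -
  have hs: "continuous_on {0..s} h" using s by (intro continuous_on_subset[OF h]) auto
  have "(integral {0..s} h)\<^sup>2 \<le> s * integral {0..s} (\<lambda>x. (h x)\<^sup>2)"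
    using integral_square_le[OF hs] s by simp
  also have "\<dots> \<le> integral {0..s} (\<lambda>x. (h x)\<^sup>2)"
    using s by (intro mult_left_le_one_le integral_nonneg integrable_continuous_interval
        continuous_intros hs) auto
  also have "\<dots> \<le> integral {0..1} (\<lambda>x. (h x)\<^sup>2)"
    using s by (intro integral_subset_le integrable_continuous_interval continuous_intros h hs) auto
  finally show ?thesis .
qed

lemma ground_quotient_diff_sq_le:
  assumes b: "2 \<le> b" and f: "smooth_on_unit f" and s: "s \<in> {0..1}"
  shows "(f s / ground_state b j s - f 0 / ground_state b j 0)\<^sup>2
           \<le> edge_defect b j f / (ground_state_min b j)\<^sup>2"
proof -
  obtain f' where cf': "continuous_on {0..1} f'" and cf: "continuous_on {0..1} f"
    and df: "\<And>x. x \<in> {0..1} \<Longrightarrow> (f has_real_derivative f' x) (at x within {0..1})"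
    and deriv: "\<And>x. x \<in> {0<..<1} \<Longrightarrow> deriv f x = f' x"
    using smooth_on_unit_C1[OF f] by blast
  define \<phi> where "\<phi> = ground_state b j"
  define m where "m = ground_state_min b j"
  have \<phi>_pos: "0 < \<phi> x" and m_le: "m \<le> \<phi> x" if "x \<in> {0..1}" for x
    using that ground_state_pos[OF b] ground_state_ge_min[OF b] by (auto simp: \<phi>_def m_def)
  have m: "0 < m" using ground_state_min_pos[OF b] by (simp add: m_def)
  define g where "g x = f x / \<phi> x" for x
  define g' where "g' x = (f' x - ground_state_log_deriv b j x * f x) / \<phi> x" for x
  have dg: "(g has_real_derivative g' x) (at x within {0..1})" if x: "x \<in> {0..1}" for x
    using \<phi>_pos[OF x] unfolding g_def g'_def \<phi>_def ground_state_log_deriv_def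
    by (auto intro!: derivative_eq_intros df x has_real_derivative_ground_state simp: field_simps power2_eq_square)
  have cg': "continuous_on {0..1} g'" unfolding g'_def \<phi>_def using ground_state_pos[OF b, of _ j]
    by (intro continuous_intros cf' cf continuous_on_ground_state_log_deriv[OF b] continuous_on_ground_state)
       (metis atLeastAtMost_iff less_irrefl)
  have "(g' has_integral g s - g 0) {0..s}"
  proof (rule fundamental_theorem_of_calculus)
    show "(g has_vector_derivative g' x) (at x within {0..s})" if "x \<in> {0..s}" for x
      using dg[of x] that s by (auto simp: has_real_derivative_iff_has_vector_derivative[symmetric]
        intro: DERIV_subset)
  qed (use s in auto)
  then have "(g s - g 0)\<^sup>2 = (integral {0..s} g')\<^sup>2" by (simp add: integral_unique)
  also have "\<dots> \<le> integral {0..1} (\<lambda>x. (g' x)\<^sup>2)"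
    using cg' s by (rule integral_square_le_unit)
  also have "\<dots> \<le> integral {0..1} (\<lambda>x. (f' x - ground_state_log_deriv b j x * f x)\<^sup>2 / m\<^sup>2)"
  proof (rule integral_le)
    show "(\<lambda>x. (g' x)\<^sup>2) integrable_on {0..1}"
      by (intro integrable_continuous_interval continuous_intros cg')
    show "(\<lambda>x. (f' x - ground_state_log_deriv b j x * f x)\<^sup>2 / m\<^sup>2) integrable_on {0..1}"
      using m by (intro integrable_continuous_interval continuous_intros cf' cf
          continuous_on_ground_state_log_deriv[OF b]) auto
    show "(g' x)\<^sup>2 \<le> (f' x - ground_state_log_deriv b j x * f x)\<^sup>2 / m\<^sup>2" if "x \<in> {0..1}" for x
      unfolding g'_def power_divide using m m_le[OF that]
      by (intro divide_left_mono power_mono mult_pos_pos) auto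
  qed
  also have "\<dots> = edge_defect b j f / m\<^sup>2"
    using integral_unique[OF edge_defect_eq[OF b cf' cf deriv]] by simp
  finally show ?thesis by (simp add: g_def \<phi>_def m_def)
qed

definition edge_sup_bound :: "nat \<Rightarrow> nat \<Rightarrow> (real \<Rightarrow> real) \<Rightarrow> real" where
  "edge_sup_bound b j f = (ground_state_max b j)\<^sup>2 *
     (2 * (f 0 / ground_state b j 0)\<^sup>2 + 2 * (edge_defect b j f / (ground_state_min b j)\<^sup>2))"

lemma edge_sup_bound_nonneg: "2 \<le> b \<Longrightarrow> smooth_on_unit f \<Longrightarrow> 0 \<le> edge_sup_bound b j f"
  unfolding edge_sup_bound_def using edge_defect_nonneg by simp

lemma edge_square_le:
  assumes b: "2 \<le> b" and f: "smooth_on_unit f" and s: "s \<in> {0..1}"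
  shows "(f s)\<^sup>2 \<le> edge_sup_bound b j f"
proof -
  define \<phi> where "\<phi> = ground_state b j"
  have \<phi>: "0 < \<phi> s" "\<phi> s \<le> ground_state_max b j"
    using s ground_state_pos[OF b] ground_state_le_max[OF b] by (auto simp: \<phi>_def)
  have "x\<^sup>2 \<le> 2 * y\<^sup>2 + 2 * (x - y)\<^sup>2" for x y :: real
    using zero_le_power2[of "x - 2 * y"] by (simp add: power2_eq_square algebra_simps)
  then have "(f s / \<phi> s)\<^sup>2 \<le> 2 * (f 0 / \<phi> 0)\<^sup>2 + 2 * (f s / \<phi> s - f 0 / \<phi> 0)\<^sup>2" .
  also have "\<dots> \<le> 2 * (f 0 / \<phi> 0)\<^sup>2 + 2 * (edge_defect b j f / (ground_state_min b j)\<^sup>2)"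
    using ground_quotient_diff_sq_le[OF b f s, of j] by (simp add: \<phi>_def)
  finally have quotient: "(f s / \<phi> s)\<^sup>2 \<le> \<dots>" .
  have "(f s)\<^sup>2 = (\<phi> s)\<^sup>2 * (f s / \<phi> s)\<^sup>2" using \<phi> by (simp add: power_divide)
  also have "\<dots> \<le> (ground_state_max b j)\<^sup>2 * (f s / \<phi> s)\<^sup>2"
    using \<phi> by (intro mult_right_mono power_mono) auto
  also have "\<dots> \<le> edge_sup_bound b j f"
    unfolding edge_sup_bound_def using quotient by (intro mult_left_mono) (simp_all add: \<phi>_def)
  finally show ?thesis .
qed

lemma tree_edges_0: "tree_edges b 0 = {[]}"
  unfolding tree_edges_def by auto

lemma tree_edges_Suc: "tree_edges b (Suc j) = (\<lambda>(w, k). w @ [k]) ` (tree_edges b j \<times> {..<b})"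
proof (rule set_eqI)
  fix x
  show "x \<in> tree_edges b (Suc j) \<longleftrightarrow> x \<in> (\<lambda>(w, k). w @ [k]) ` (tree_edges b j \<times> {..<b})"
  proof
    assume x: "x \<in> tree_edges b (Suc j)"
    then obtain w k where "x = w @ [k]" by (cases x rule: rev_cases) (auto simp: tree_edges_def)
    with x show "x \<in> (\<lambda>(w, k). w @ [k]) ` (tree_edges b j \<times> {..<b})"
      unfolding tree_edges_def by (auto intro!: image_eqI[of _ _ "(w, k)"])
  qed (auto simp: tree_edges_def)
qed

lemma inj_on_snoc: "inj_on (\<lambda>(w, k). w @ [k]) A"
  by (auto simp: inj_on_def)

lemma card_tree_edges: "card (tree_edges b j) = b ^ j"
  by (induction j) (simp_all add: tree_edges_0 tree_edges_Suc card_image[OF inj_on_snoc] card_cartesian_product)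

lemma sum_tree_edges_Suc:
  "(\<Sum>w\<in>tree_edges b (Suc j). f w) = (\<Sum>w\<in>tree_edges b j. \<Sum>k<b. f (w @ [k]))"
  unfolding tree_edges_Suc
  by (subst sum.reindex[OF inj_on_snoc]) (simp add: sum.cartesian_product split_def)

lemma length_tree_edges: "w \<in> tree_edges b j \<Longrightarrow> length w = j"
  by (simp add: tree_edges_def)

lemma tree_C0inf_smooth: "tree_C0inf b u \<Longrightarrow> w \<in> tree_edges b j \<Longrightarrow> smooth_on_unit (u w)"
  unfolding tree_C0inf_def by blast

lemma tree_C0inf_vertex: "tree_C0inf b u \<Longrightarrow> w \<in> tree_edges b j \<Longrightarrow> k < b \<Longrightarrow> u (w @ [k]) 0 = u w 1"
  unfolding tree_C0inf_def by blast

definition vanishes_from :: "nat \<Rightarrow> nat \<Rightarrow> (nat list \<Rightarrow> real \<Rightarrow> real) \<Rightarrow> bool" where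
  "vanishes_from b N u \<longleftrightarrow> (\<forall>j\<ge>N. \<forall>w\<in>tree_edges b j. \<forall>s\<in>{0..1}. u w s = 0)"

lemma tree_C0inf_vanishes_from: "tree_C0inf b u \<Longrightarrow> \<exists>N. vanishes_from b N u"
  unfolding tree_C0inf_def vanishes_from_def by blast

definition tree_energy :: "nat \<Rightarrow> (nat list \<Rightarrow> real \<Rightarrow> real) \<Rightarrow> real" where
  "tree_energy b u = tree_integral b (\<lambda>w s. (deriv (u w) s)\<^sup>2 - lambda_b b * (u w s)\<^sup>2)"

definition generation_defect :: "nat \<Rightarrow> (nat list \<Rightarrow> real \<Rightarrow> real) \<Rightarrow> nat \<Rightarrow> real" where
  "generation_defect b u j = (\<Sum>w\<in>tree_edges b j. edge_defect b j (u w))"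

lemma generation_defect_nonneg: "2 \<le> b \<Longrightarrow> tree_C0inf b u \<Longrightarrow> 0 \<le> generation_defect b u j"
  unfolding generation_defect_def by (intro sum_nonneg edge_defect_nonneg tree_C0inf_smooth)

text \<open>The boundary terms of the edge identities telescope across the vertices by the Kirchhoff
  condition of the ground state, and vanish at the root by its Neumann condition.\<close>
lemma tree_energy_eq_sum_generation_defect:
  assumes b: "2 \<le> b" and u: "tree_C0inf b u" and N: "vanishes_from b N u"
  shows "tree_energy b u = (\<Sum>j<N. generation_defect b u j)"
proof -
  define \<rho> where "\<rho> = ground_state_log_deriv b"
  define X where "X j = (\<Sum>w\<in>tree_edges b j. \<rho> j 0 * (u w 0)\<^sup>2)" for j
  define Y where "Y j = (\<Sum>w\<in>tree_edges b j. \<rho> j 1 * (u w 1)\<^sup>2)" for j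
  define E where "E = generation_defect b u"
  have edge: "integral {0..1} (\<lambda>s. (deriv (u w) s)\<^sup>2 - lambda_b b * (u w s)\<^sup>2)
      = edge_defect b j (u w) + \<rho> j 1 * (u w 1)\<^sup>2 - \<rho> j 0 * (u w 0)\<^sup>2" if "w \<in> tree_edges b j" for w j
    using integral_unique[OF edge_energy_identity[OF b tree_C0inf_smooth[OF u that]]] by (simp add: \<rho>_def)
  have generation: "(\<Sum>w\<in>tree_edges b j. integral {0..1} (\<lambda>s. (deriv (u w) s)\<^sup>2 - lambda_b b * (u w s)\<^sup>2))
      = E j + Y j - X j" for j
    unfolding E_def X_def Y_def generation_defect_def sum.distrib[symmetric] sum_subtractf[symmetric]
    by (rule sum.cong) (simp_all add: edge)
  have Y_eq_X: "Y j = X (Suc j)" for j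
    using b by (simp add: X_def Y_def \<rho>_def sum_tree_edges_Suc tree_C0inf_vertex[OF u]
        ground_state_log_deriv_vertex sum_distrib_left mult.assoc)
  have "X 0 = 0" using b by (simp add: X_def \<rho>_def tree_edges_0 ground_state_log_deriv_root)
  have vanish: "E j = 0" "X j = 0" "Y j = 0" if "N \<le> j" for j
    using N that by (auto simp: E_def X_def Y_def vanishes_from_def generation_defect_def
        intro!: sum.neutral edge_defect_eq_0_if_vanishes)
  have "tree_energy b u = (\<Sum>j. E j + Y j - X j)"
    unfolding tree_energy_def tree_integral_def generation ..
  also have "\<dots> = (\<Sum>j<N. E j + Y j - X j)"
    by (rule suminf_finite) (auto simp: vanish)
  also have "\<dots> = (\<Sum>j<N. E j) + X N - X 0"
    unfolding Y_eq_X by (induction N) (auto simp: algebra_simps)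
  finally show ?thesis using vanish \<open>X 0 = 0\<close> by (simp add: E_def)
qed

lemma tree_energy_nonneg: "2 \<le> b \<Longrightarrow> tree_C0inf b u \<Longrightarrow> 0 \<le> tree_energy b u"
  using tree_C0inf_vanishes_from[of b u] tree_energy_eq_sum_generation_defect[of b u]
    generation_defect_nonneg[of b u] by (metis sum_nonneg)

section \<open>A discrete weighted Hardy inequality\<close>

lemma mult_inverse_sqrt_diff_le:
  fixes a :: real assumes a: "0 < a"
  shows "a * (1 / sqrt a - 1 / sqrt (a + 1)) \<le> sqrt (a + 1) - sqrt a"
proof -
  define s where "s = sqrt a"
  define t where "t = sqrt (a + 1)"
  have st: "0 < s" "s < t" "a = s\<^sup>2" using a by (simp_all add: s_def t_def)
  have "a * (1 / s - 1 / t) = s * (t - s) / t" using st by (simp add: field_simps power2_eq_square)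
  also have "\<dots> \<le> t - s" using st by (simp add: divide_le_eq mult_right_mono mult.commute)
  finally show ?thesis by (simp add: s_def t_def)
qed

lemma sqrt_div_le_inverse_sqrt_diff:
  fixes a :: real assumes a: "0 < a"
  shows "sqrt a / (a * (a + 1)) \<le> 2 * (1 / sqrt a - 1 / sqrt (a + 1))"
proof -
  define s where "s = sqrt a"
  define t where "t = sqrt (a + 1)"
  have st: "0 < s" "0 < t" "a = s\<^sup>2" "a + 1 = t\<^sup>2" using a by (simp_all add: s_def t_def)
  have "1 \<le> 2 * t * (t - s)"
    using sum_squares_bound[of t s] st by (simp add: power2_eq_square algebra_simps)
  then have "1 / (s * t\<^sup>2) \<le> 2 * t * (t - s) / (s * t\<^sup>2)"
    using st by (intro divide_right_mono) auto
  moreover have "sqrt a / (a * (a + 1)) = 1 / (s * t\<^sup>2)" "2 * t * (t - s) / (s * t\<^sup>2) = 2 * (1 / s - 1 / t)"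
    using st by (simp_all add: s_def[symmetric] field_simps power2_eq_square)
  ultimately show ?thesis by (simp add: s_def t_def)
qed

lemma sum_div_sqrt_le:
  fixes \<mu> :: "nat \<Rightarrow> real"
  assumes \<mu>: "\<And>i. 0 \<le> \<mu> i" and K: "\<And>n. (\<Sum>i\<le>n. \<mu> i) \<le> K * (real n + 1)"
  shows "(\<Sum>i\<le>n. \<mu> i / sqrt (real i + 1)) \<le> 2 * K * sqrt (real n + 1)"
proof -
  have K0: "0 \<le> K" using K[of 0] \<mu>[of 0] by simp
  have abel: "(\<Sum>i\<le>n. \<mu> i / sqrt (real i + 1))
      \<le> (\<Sum>i\<le>n. \<mu> i) / sqrt (real n + 1) + K * (sqrt (real n + 1) - 1)" for n
  proof (induction n)
    case (Suc n)
    define M where "M = (\<Sum>i\<le>n. \<mu> i)"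
    define a where "a = real n + 1"
    have M: "0 \<le> M" "M \<le> K * a" using K[of n] \<mu> by (auto simp: M_def a_def intro: sum_nonneg)
    have "M * (1 / sqrt a - 1 / sqrt (a + 1)) \<le> K * a * (1 / sqrt a - 1 / sqrt (a + 1))"
      using M by (intro mult_right_mono) (auto simp: a_def field_simps)
    also have "\<dots> \<le> K * (sqrt (a + 1) - sqrt a)"
      using mult_inverse_sqrt_diff_le[of a] K0 by (simp add: a_def mult.assoc mult_left_mono)
    finally have "M * (1 / sqrt a - 1 / sqrt (a + 1)) \<le> K * (sqrt (a + 1) - sqrt a)" .
    with Suc.IH show ?case
      by (simp add: M_def[symmetric] a_def add_divide_distrib right_diff_distrib algebra_simps)
  qed simp
  have "(\<Sum>i\<le>n. \<mu> i) / sqrt (real n + 1) \<le> K * (real n + 1) / sqrt (real n + 1)"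
    using K[of n] by (intro divide_right_mono) auto
  also have "\<dots> = K * sqrt (real n + 1)"
    by (simp add: real_div_sqrt del: of_nat_Suc flip: times_divide_eq_right)
  finally show ?thesis using abel[of n] K0 by (simp add: algebra_simps)
qed

lemma sum_partial_sums_mult_diff:
  fixes d z :: "nat \<Rightarrow> real"
  shows "(\<Sum>j<N. (\<Sum>i<Suc j. d i) * (z j - z (Suc j))) = (\<Sum>j<N. d j * z j) - (\<Sum>i<N. d i) * z N"
  by (induction N) (simp_all add: algebra_simps)

definition hardy_step :: "(nat \<Rightarrow> real) \<Rightarrow> nat \<Rightarrow> real" where
  "hardy_step \<mu> j = (\<Sum>i\<le>j. \<mu> i / sqrt (real i + 1)) / ((real j + 1) * (real j + 2))"

definition hardy_weight :: "(nat \<Rightarrow> real) \<Rightarrow> nat \<Rightarrow> nat \<Rightarrow> real" where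
  "hardy_weight \<mu> N j = 1 / sqrt (real N + 1) + (\<Sum>l = j..<N. hardy_step \<mu> l)"

lemma hardy_step_nonneg: "(\<And>i. 0 \<le> \<mu> i) \<Longrightarrow> 0 \<le> hardy_step \<mu> j"
  unfolding hardy_step_def by (intro divide_nonneg_nonneg sum_nonneg) auto

lemma hardy_weight_pos: "(\<And>i. 0 \<le> \<mu> i) \<Longrightarrow> 0 < hardy_weight \<mu> N j"
  unfolding hardy_weight_def by (intro add_pos_nonneg sum_nonneg hardy_step_nonneg) auto

lemma hardy_weight_diff:
  "j < N \<Longrightarrow> hardy_weight \<mu> N j - hardy_weight \<mu> N (Suc j) = hardy_step \<mu> j"
  unfolding hardy_weight_def by (simp add: sum.atLeast_Suc_lessThan)

lemma hardy_step_le: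
  assumes \<mu>: "\<And>i. 0 \<le> \<mu> i" and K: "\<And>n. (\<Sum>i\<le>n. \<mu> i) \<le> K * (real n + 1)"
  shows "hardy_step \<mu> l \<le> 4 * K * (1 / sqrt (real l + 1) - 1 / sqrt (real (Suc l) + 1))"
proof -
  have K0: "0 \<le> K" using K[of 0] \<mu>[of 0] by simp
  have "hardy_step \<mu> l \<le> 2 * K * (sqrt (real l + 1) / ((real l + 1) * ((real l + 1) + 1)))"
    unfolding hardy_step_def using sum_div_sqrt_le[OF \<mu> K, of l]
    by (simp add: divide_right_mono algebra_simps)
  also have "\<dots> \<le> 2 * K * (2 * (1 / sqrt (real l + 1) - 1 / sqrt ((real l + 1) + 1)))"
    using K0 by (intro mult_left_mono sqrt_div_le_inverse_sqrt_diff) auto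
  finally show ?thesis by (simp add: algebra_simps)
qed

lemma hardy_weight_mult_sqrt_le:
  assumes \<mu>: "\<And>i. 0 \<le> \<mu> i" and K: "\<And>n. (\<Sum>i\<le>n. \<mu> i) \<le> K * (real n + 1)" and "j \<le> N"
  shows "hardy_weight \<mu> N j * sqrt (real j + 1) \<le> 4 * K + 1"
proof -
  define f where "f l = 1 / sqrt (real l + 1)" for l
  have K0: "0 \<le> K" using K[of 0] \<mu>[of 0] by simp
  have "(\<Sum>l = j..<N. hardy_step \<mu> l) \<le> (\<Sum>l = j..<N. 4 * K * (f l - f (Suc l)))"
    unfolding f_def by (intro sum_mono hardy_step_le[OF \<mu> K])
  also have "\<dots> = 4 * K * (f j - f N)"
    using sum_Suc_diff'[OF \<open>j \<le> N\<close>, of f] by (simp add: sum_distrib_left[symmetric] sum_subtractf)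
  finally have "hardy_weight \<mu> N j \<le> f N + 4 * K * (f j - f N)"
    by (simp add: hardy_weight_def f_def)
  also have "\<dots> \<le> (4 * K + 1) * f j"
  proof -
    have "f N \<le> f j" "0 \<le> f N" using \<open>j \<le> N\<close> by (simp_all add: f_def divide_left_mono)
    have "f N + 4 * K * (f j - f N) = (4 * K + 1) * f j - ((f j - f N) + 4 * K * f N)"
      by (simp add: algebra_simps)
    then show ?thesis using \<open>f N \<le> f j\<close> mult_nonneg_nonneg[OF K0 \<open>0 \<le> f N\<close>] by linarith
  qed
  finally show ?thesis by (simp add: f_def pos_le_divide_eq)
qed

text \<open>The steps of hardy_weight are chosen so that (j + 1) (j + 2) times the j-th step is the
  j-th partial sum of mu i / sqrt (i + 1). Summation by parts then turns the right-hand side into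
  the sum of mu j T j / (h j sqrt (j + 1)), and h j sqrt (j + 1) is at most 4 K + 1.\<close>
lemma discrete_hardy:
  fixes \<mu> T :: "nat \<Rightarrow> real"
  assumes \<mu>: "\<And>i. 0 \<le> \<mu> i" and K: "\<And>n. (\<Sum>i\<le>n. \<mu> i) \<le> K * (real n + 1)"
    and T: "\<And>j. 0 \<le> T j" and "T N = 0"
  defines "h \<equiv> hardy_weight \<mu> N"
  shows "(\<Sum>j<N. \<mu> j * T j) \<le> (4 * K + 1) *
    (\<Sum>j<N. (real j + 1) * (real j + 2) * hardy_step \<mu> j * (T j / h j - T (Suc j) / h (Suc j)))"
proof -
  define d where "d i = \<mu> i / sqrt (real i + 1)" for i
  define z where "z j = T j / h j" for j
  have h: "0 < h j" for j using hardy_weight_pos[OF \<mu>] by (simp add: h_def)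
  have "(\<Sum>j<N. (real j + 1) * (real j + 2) * hardy_step \<mu> j * (T j / h j - T (Suc j) / h (Suc j)))
      = (\<Sum>j<N. (\<Sum>i<Suc j. d i) * (z j - z (Suc j)))"
    by (intro sum.cong refl) (simp add: hardy_step_def d_def z_def lessThan_Suc_atMost)
  also have "\<dots> = (\<Sum>j<N. d j * z j)"
    using \<open>T N = 0\<close> by (subst sum_partial_sums_mult_diff) (simp add: z_def)
  finally have rhs: "(\<Sum>j<N. (real j + 1) * (real j + 2) * hardy_step \<mu> j * (T j / h j - T (Suc j) / h (Suc j)))
      = (\<Sum>j<N. d j * z j)" .
  have "\<mu> j * T j \<le> (4 * K + 1) * (d j * z j)" if "j < N" for j
  proof -
    have "\<mu> j * T j = (d j * z j) * (h j * sqrt (real j + 1))"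
      using h[of j] by (simp add: d_def z_def field_simps)
    also have "\<dots> \<le> (d j * z j) * (4 * K + 1)"
      using hardy_weight_mult_sqrt_le[OF \<mu> K, of j N] that h[of j] \<mu>[of j] T[of j]
      by (intro mult_left_mono) (auto simp: h_def d_def z_def)
    finally show ?thesis by (simp only: mult.commute)
  qed
  then have "(\<Sum>j<N. \<mu> j * T j) \<le> (\<Sum>j<N. (4 * K + 1) * (d j * z j))" by (intro sum_mono) auto
  then show ?thesis by (simp add: rhs sum_distrib_left)
qed

definition vertex_mass :: "nat \<Rightarrow> (nat list \<Rightarrow> real \<Rightarrow> real) \<Rightarrow> nat \<Rightarrow> real" where
  "vertex_mass b u j = (\<Sum>w\<in>tree_edges b j. (u w 0 / ground_state b j 0)\<^sup>2) / real b ^ j"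

lemma vertex_mass_nonneg: "0 \<le> vertex_mass b u j"
  unfolding vertex_mass_def by (intro divide_nonneg_nonneg sum_nonneg) auto

lemma vertex_mass_eq_0: "vanishes_from b N u \<Longrightarrow> vertex_mass b u N = 0"
  unfolding vertex_mass_def vanishes_from_def by auto

lemma vertex_mass_Suc:
  assumes "1 \<le> b" "tree_C0inf b u"
  shows "(\<Sum>w\<in>tree_edges b j. (u w 1 / ground_state b j 1)\<^sup>2) = real b ^ j * vertex_mass b u (Suc j)"
proof -
  have "(\<Sum>w\<in>tree_edges b (Suc j). (u w 0 / ground_state b (Suc j) 0)\<^sup>2)
      = (\<Sum>w\<in>tree_edges b j. \<Sum>k<b. (u w 1 / ground_state b j 1)\<^sup>2)"
    unfolding sum_tree_edges_Suc
    by (intro sum.cong refl) (simp add: tree_C0inf_vertex[OF assms(2)] ground_state_vertex)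
  also have "\<dots> = real b * (\<Sum>w\<in>tree_edges b j. (u w 1 / ground_state b j 1)\<^sup>2)"
    by (simp add: sum_distrib_left)
  finally show ?thesis using assms(1) by (simp add: vertex_mass_def)
qed

lemma picone_inequality:
  fixes h1 h2 x y :: real
  assumes "0 < h1" "0 < h2"
  shows "(h1 - h2) * (x\<^sup>2 / h1 - y\<^sup>2 / h2) \<le> (y - x)\<^sup>2"
proof -
  have "(y - x)\<^sup>2 - (h1 - h2) * (x\<^sup>2 / h1 - y\<^sup>2 / h2) = h1 * h2 * (x / h1 - y / h2)\<^sup>2"
    using assms by (simp add: field_simps power2_eq_square)
  moreover have "0 \<le> h1 * h2 * (x / h1 - y / h2)\<^sup>2" using assms by simp
  ultimately show ?thesis by linarith
qed

definition picone_const :: "nat \<Rightarrow> real" where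
  "picone_const b = (tree_decay b)\<^sup>2 * (sin (tree_freq b))^4 / 2"

lemma picone_const_pos: "2 \<le> b \<Longrightarrow> 0 < picone_const b"
  using tree_decay_bounds[of b] sin_tree_freq_bounds[of b] by (simp add: picone_const_def)

lemma generation_defect_ge_vertex_mass:
  assumes b: "2 \<le> b" and u: "tree_C0inf b u" and h: "0 < h1" "0 < h2"
  shows "picone_const b * ((real j + 1) * (real j + 2) * (h1 - h2) *
           (vertex_mass b u j / h1 - vertex_mass b u (Suc j) / h2)) \<le> generation_defect b u j"
proof -
  define B where "B = real b ^ j"
  define c where "c = picone_const b * (real j + 1) * (real j + 2) / B"
  define x where "x w = u w 0 / ground_state b j 0" for w
  define y where "y w = u w 1 / ground_state b j 1" for w
  have B: "0 < B" using b by (simp add: B_def)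
  have c0: "0 \<le> c" using picone_const_pos[OF b] B by (simp add: c_def)
  have c_le: "c \<le> (ground_state_min b j)\<^sup>2"
  proof -
    have "picone_const b * (real j + 1) * (real j + 2)
        \<le> (tree_decay b)\<^sup>2 * (sin (tree_freq b))^4 * (real j + 1)\<^sup>2"
      using picone_const_pos[OF b] by (simp add: picone_const_def power2_eq_square algebra_simps)
    also have "\<dots> \<le> (ground_state_min b j)\<^sup>2 * real b ^ j" by (rule ground_state_min_sq_scaled[OF b])
    finally show ?thesis using b by (simp add: c_def B_def divide_le_eq)
  qed
  define X where "X = (\<Sum>w\<in>tree_edges b j. (x w)\<^sup>2)"
  define Y where "Y = (\<Sum>w\<in>tree_edges b j. (y w)\<^sup>2)"
  have T: "vertex_mass b u j = X / B" "vertex_mass b u (Suc j) = Y / B"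
    using vertex_mass_Suc[of b u j] b u B by (simp_all add: vertex_mass_def X_def Y_def x_def y_def B_def)
  have "picone_const b * ((real j + 1) * (real j + 2) * (h1 - h2) *
           (vertex_mass b u j / h1 - vertex_mass b u (Suc j) / h2))
      = c * ((h1 - h2) * (X / h1 - Y / h2))"
    unfolding T c_def using B h by (simp add: field_simps)
  also have "\<dots> = (\<Sum>w\<in>tree_edges b j. c * ((h1 - h2) * ((x w)\<^sup>2 / h1 - (y w)\<^sup>2 / h2)))"
    by (simp add: X_def Y_def sum_divide_distrib sum_subtractf[symmetric] sum_distrib_left)
  also have "\<dots> \<le> (\<Sum>w\<in>tree_edges b j. (ground_state_min b j)\<^sup>2 * (y w - x w)\<^sup>2)"
    using c0 c_le picone_inequality[OF h]
    by (intro sum_mono order_trans[OF mult_left_mono mult_right_mono]) auto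
  also have "\<dots> \<le> generation_defect b u j"
    unfolding generation_defect_def
  proof (rule sum_mono)
    fix w assume w: "w \<in> tree_edges b j"
    show "(ground_state_min b j)\<^sup>2 * (y w - x w)\<^sup>2 \<le> edge_defect b j (u w)"
      using ground_quotient_diff_sq_le[OF b tree_C0inf_smooth[OF u w], of 1 j] ground_state_min_pos[OF b, of j]
      by (simp add: x_def y_def field_simps)
  qed
  finally show ?thesis .
qed

lemma sum_vertex_mass_le_generation_defect:
  assumes b: "2 \<le> b" and u: "tree_C0inf b u" and N: "vanishes_from b N u"
    and \<mu>: "\<And>i. 0 \<le> \<mu> i" and K: "\<And>n. (\<Sum>i\<le>n. \<mu> i) \<le> K * (real n + 1)"
  shows "(\<Sum>j<N. \<mu> j * vertex_mass b u j) \<le> (4 * K + 1) / picone_const b * (\<Sum>j<N. generation_defect b u j)"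
proof -
  define h where "h = hardy_weight \<mu> N"
  define T where "T = vertex_mass b u"
  have K0: "0 \<le> K" using K[of 0] \<mu>[of 0] by simp
  have \<epsilon>: "0 < picone_const b" by (rule picone_const_pos[OF b])
  have h: "0 < h j" for j using hardy_weight_pos[OF \<mu>] by (simp add: h_def)
  have "(real j + 1) * (real j + 2) * hardy_step \<mu> j * (T j / h j - T (Suc j) / h (Suc j))
      \<le> generation_defect b u j / picone_const b" if "j < N" for j
    using generation_defect_ge_vertex_mass[OF b u h[of j] h[of "Suc j"], of j] hardy_weight_diff[OF that, of \<mu>] \<epsilon>
    by (simp add: h_def T_def pos_le_divide_eq mult_ac)
  then have "(\<Sum>j<N. (real j + 1) * (real j + 2) * hardy_step \<mu> j * (T j / h j - T (Suc j) / h (Suc j)))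
      \<le> (\<Sum>j<N. generation_defect b u j) / picone_const b"
    unfolding sum_divide_distrib by (intro sum_mono) simp
  then have "(4 * K + 1) * (\<Sum>j<N. (real j + 1) * (real j + 2) * hardy_step \<mu> j * (T j / h j - T (Suc j) / h (Suc j)))
      \<le> (4 * K + 1) * ((\<Sum>j<N. generation_defect b u j) / picone_const b)"
    using K0 by (intro mult_left_mono) auto
  with discrete_hardy[of \<mu> K "vertex_mass b u" N, OF \<mu> K vertex_mass_nonneg vertex_mass_eq_0[OF N]]
  show ?thesis
    by (simp add: h_def T_def)
qed

definition tree_hardy_const :: "nat \<Rightarrow> real \<Rightarrow> real" where
  "tree_hardy_const b K = (128 * K + 1) / picone_const b
     + 32 * K / ((tree_decay b)\<^sup>2 * (sin (tree_freq b))\<^sup>2)"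

lemma tree_hardy_const_nonneg: "2 \<le> b \<Longrightarrow> 0 \<le> K \<Longrightarrow> 0 \<le> tree_hardy_const b K"
  using picone_const_pos[of b] by (simp add: tree_hardy_const_def)

lemma weight_le_of_linear_growth:
  fixes \<Psi> :: "nat \<Rightarrow> real"
  assumes \<Psi>: "\<And>j. 0 \<le> \<Psi> j" and K: "\<And>n. (\<Sum>j\<le>n. \<Psi> j * (real j + 1)\<^sup>2) \<le> K * (real n + 1)"
  shows "\<Psi> j \<le> K"
proof -
  have "\<Psi> j * (real j + 1)\<^sup>2 \<le> K * (real j + 1)"
    using K[of j] \<Psi> member_le_sum[of j "{..j}" "\<lambda>i. \<Psi> i * (real i + 1)\<^sup>2"] by auto
  then have "\<Psi> j * (real j + 1) \<le> K" by (simp add: power2_eq_square mult.assoc[symmetric])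
  moreover have "\<Psi> j \<le> \<Psi> j * (real j + 1)" using \<Psi>[of j] by (simp add: algebra_simps)
  ultimately show ?thesis by linarith
qed

lemma sum_generation_sup_bound_le:
  fixes \<Psi> :: "nat \<Rightarrow> real"
  assumes b: "2 \<le> b" and u: "tree_C0inf b u" and N: "vanishes_from b N u"
    and \<Psi>: "\<And>j. 0 \<le> \<Psi> j" and K: "\<And>n. (\<Sum>j\<le>n. \<Psi> j * (real j + 1)\<^sup>2) \<le> K * (real n + 1)"
  shows "(\<Sum>j<N. \<Psi> j * (\<Sum>w\<in>tree_edges b j. edge_sup_bound b j (u w)))
      \<le> tree_hardy_const b K * (\<Sum>j<N. generation_defect b u j)"
proof -
  define E where "E = generation_defect b u"
  define T where "T = vertex_mass b u"
  define \<mu> where "\<mu> j = 32 * \<Psi> j * (real j + 1)\<^sup>2" for j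
  define R where "R = 16 / ((tree_decay b)\<^sup>2 * (sin (tree_freq b))\<^sup>2)"
  have E: "0 \<le> E j" for j using generation_defect_nonneg[OF b u] by (simp add: E_def)
  have \<Psi>_le: "\<Psi> j \<le> K" for j using \<Psi> K by (rule weight_le_of_linear_growth)
  have generation: "\<Psi> j * (\<Sum>w\<in>tree_edges b j. edge_sup_bound b j (u w)) \<le> \<mu> j * T j + 2 * K * R * E j"
    for j
  proof -
    have "\<Psi> j * (\<Sum>w\<in>tree_edges b j. edge_sup_bound b j (u w))
        = 2 * \<Psi> j * ((ground_state_max b j)\<^sup>2 * real b ^ j) * T j
          + 2 * \<Psi> j * (ground_state_max b j / ground_state_min b j)\<^sup>2 * E j"
      using b by (simp add: edge_sup_bound_def E_def T_def generation_defect_def vertex_mass_def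
          sum_distrib_left sum.distrib power_divide sum_divide_distrib algebra_simps)
    also have "\<dots> \<le> 2 * \<Psi> j * (16 * (real j + 1)\<^sup>2) * T j + 2 * K * R * E j"
    proof (rule add_mono)
      show "2 * \<Psi> j * ((ground_state_max b j)\<^sup>2 * real b ^ j) * T j \<le> 2 * \<Psi> j * (16 * (real j + 1)\<^sup>2) * T j"
        using \<Psi>[of j] vertex_mass_nonneg[of b u j] ground_state_max_sq_scaled[OF b, of j]
        by (intro mult_right_mono mult_left_mono) (auto simp: T_def)
      show "2 * \<Psi> j * (ground_state_max b j / ground_state_min b j)\<^sup>2 * E j \<le> 2 * K * R * E j"
        using \<Psi>[of j] \<Psi>_le[of j] E[of j] ground_state_ratio_sq[OF b, of j]
        by (intro mult_right_mono mult_mono) (auto simp: R_def)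
    qed
    finally show ?thesis by (simp add: \<mu>_def)
  qed
  have "(\<Sum>j<N. \<mu> j * T j) \<le> (4 * (32 * K) + 1) / picone_const b * (\<Sum>j<N. E j)"
    unfolding T_def E_def
    using \<Psi> K by (intro sum_vertex_mass_le_generation_defect[OF b u N])
       (auto simp: \<mu>_def sum_distrib_left[symmetric] mult.assoc)
  moreover have "(\<Sum>j<N. \<Psi> j * (\<Sum>w\<in>tree_edges b j. edge_sup_bound b j (u w)))
      \<le> (\<Sum>j<N. \<mu> j * T j) + 2 * K * R * (\<Sum>j<N. E j)"
    using sum_mono[of "{..<N}", OF generation] by (simp add: sum.distrib sum_distrib_left)
  ultimately have "(\<Sum>j<N. \<Psi> j * (\<Sum>w\<in>tree_edges b j. edge_sup_bound b j (u w)))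
      \<le> (128 * K + 1) / picone_const b * (\<Sum>j<N. E j) + 2 * K * R * (\<Sum>j<N. E j)"
    by simp
  then show ?thesis by (simp add: tree_hardy_const_def R_def E_def algebra_simps)
qed

definition unit_weight :: "(real \<Rightarrow> real) \<Rightarrow> nat \<Rightarrow> ennreal" where
  "unit_weight \<psi> j = (\<integral>\<^sup>+ s\<in>{0..1}. ennreal (\<psi> (real j + s)) \<partial>lborel)"

definition radial_integral :: "(real \<Rightarrow> real) \<Rightarrow> real \<Rightarrow> ennreal" where
  "radial_integral \<psi> r = (\<integral>\<^sup>+ t\<in>{0..r}. ennreal (\<psi> t * (1 + t)\<^sup>2) \<partial>lborel)"

lemma nn_integral_unit_shift:
  fixes G :: "real \<Rightarrow> ennreal"
  assumes "G \<in> borel_measurable borel"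
  shows "(\<integral>\<^sup>+ s\<in>{0..1}. G (a + s) \<partial>lborel) = (\<integral>\<^sup>+ t\<in>{a..<a + 1}. G t \<partial>lborel)"
proof -
  have "(\<integral>\<^sup>+ s\<in>{0..1}. G (a + s) \<partial>lborel) = (\<integral>\<^sup>+ s. G (a + s) * indicator {0..<1} s \<partial>lborel)"
    by (intro nn_integral_cong_AE, use AE_lborel_singleton[of 1] in eventually_elim)
       (auto simp: indicator_def)
  also have "\<dots> = (\<integral>\<^sup>+ s. G (a + 1 * s) * indicator {a..<a + 1} (a + 1 * s) \<partial>lborel)"
    by (intro nn_integral_cong) (auto simp: indicator_def)
  also have "\<dots> = (\<integral>\<^sup>+ t\<in>{a..<a + 1}. G t \<partial>lborel)"
    using nn_integral_real_affine[of "\<lambda>t. G t * indicator {a..<a + 1} t" 1 a] assms by simp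
  finally show ?thesis .
qed

lemma sum_indicator_unit_intervals:
  "(\<Sum>j<n. indicator {real j..<real j + 1} t :: ennreal) = indicator {0..<real n} t"
proof (cases "0 \<le> t \<and> t < real n")
  case True
  define m where "m = nat \<lfloor>t\<rfloor>"
  have "t \<in> {real j..<real j + 1} \<longleftrightarrow> j = m" for j
    using True by (auto simp: m_def) linarith+
  moreover have "m < n" using True by (simp add: m_def nat_less_iff floor_less_iff)
  ultimately show ?thesis using True by (simp add: indicator_def)
next
  case False
  then show ?thesis by (auto simp: indicator_def intro!: sum.neutral) linarith?
qed

lemma nn_integral_split_unit_intervals:
  fixes G :: "real \<Rightarrow> ennreal"
  assumes "G \<in> borel_measurable borel"
  shows "(\<Sum>j<n. \<integral>\<^sup>+ t\<in>{real j..<real j + 1}. G t \<partial>lborel) = (\<integral>\<^sup>+ t\<in>{0..<real n}. G t \<partial>lborel)"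
proof -
  have "(\<Sum>j<n. \<integral>\<^sup>+ t\<in>{real j..<real j + 1}. G t \<partial>lborel)
      = (\<integral>\<^sup>+ t. (\<Sum>j<n. G t * indicator {real j..<real j + 1} t) \<partial>lborel)"
    using assms by (intro nn_integral_sum[symmetric]) auto
  also have "\<dots> = (\<integral>\<^sup>+ t\<in>{0..<real n}. G t \<partial>lborel)"
    by (simp add: sum_distrib_left[symmetric] sum_indicator_unit_intervals)
  finally show ?thesis .
qed

lemma unit_weight_eq:
  "\<psi> \<in> borel_measurable borel \<Longrightarrow>
     unit_weight \<psi> j = (\<integral>\<^sup>+ t\<in>{real j..<real j + 1}. ennreal (\<psi> t) \<partial>lborel)"
  unfolding unit_weight_def by (rule nn_integral_unit_shift) simp

lemma sum_unit_weight_le_radial_integral: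
  assumes \<psi>: "\<psi> \<in> borel_measurable borel"
  shows "(\<Sum>j<n. unit_weight \<psi> j * ennreal ((real j + 1)\<^sup>2)) \<le> radial_integral \<psi> (real n)"
proof -
  have "unit_weight \<psi> j * ennreal ((real j + 1)\<^sup>2)
      \<le> (\<integral>\<^sup>+ t\<in>{real j..<real j + 1}. ennreal (\<psi> t * (1 + t)\<^sup>2) \<partial>lborel)" for j
  proof -
    have "unit_weight \<psi> j * ennreal ((real j + 1)\<^sup>2)
        = (\<integral>\<^sup>+ t. ennreal (\<psi> t) * indicator {real j..<real j + 1} t * ennreal ((real j + 1)\<^sup>2) \<partial>lborel)"
      using \<psi> by (simp add: unit_weight_eq nn_integral_multc)
    also have "\<dots> \<le> (\<integral>\<^sup>+ t\<in>{real j..<real j + 1}. ennreal (\<psi> t * (1 + t)\<^sup>2) \<partial>lborel)"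
    proof (intro nn_integral_mono)
      fix t :: real
      show "ennreal (\<psi> t) * indicator {real j..<real j + 1} t * ennreal ((real j + 1)\<^sup>2)
          \<le> ennreal (\<psi> t * (1 + t)\<^sup>2) * indicator {real j..<real j + 1} t"
      proof (cases "t \<in> {real j..<real j + 1} \<and> 0 \<le> \<psi> t")
        case True
        then have "\<psi> t * (real j + 1)\<^sup>2 \<le> \<psi> t * (1 + t)\<^sup>2" by (intro mult_left_mono power_mono) auto
        then show ?thesis using True by (simp add: ennreal_mult[symmetric])
      qed (auto simp: indicator_def ennreal_neg)
    qed
    finally show ?thesis .
  qed
  then have "(\<Sum>j<n. unit_weight \<psi> j * ennreal ((real j + 1)\<^sup>2))
      \<le> (\<Sum>j<n. \<integral>\<^sup>+ t\<in>{real j..<real j + 1}. ennreal (\<psi> t * (1 + t)\<^sup>2) \<partial>lborel)"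
    by (intro sum_mono)
  also have "\<dots> = (\<integral>\<^sup>+ t\<in>{0..<real n}. ennreal (\<psi> t * (1 + t)\<^sup>2) \<partial>lborel)"
    using \<psi> by (intro nn_integral_split_unit_intervals) auto
  also have "\<dots> \<le> radial_integral \<psi> (real n)"
    unfolding radial_integral_def by (intro nn_integral_mono) (auto simp: indicator_def)
  finally show ?thesis .
qed

lemma radial_integral_le_sum_unit_weight:
  assumes \<psi>: "\<psi> \<in> borel_measurable borel"
  shows "radial_integral \<psi> (real n) \<le> (\<Sum>j<n. unit_weight \<psi> j * ennreal (4 * (real j + 1)\<^sup>2))"
proof -
  have "radial_integral \<psi> (real n) = (\<integral>\<^sup>+ t\<in>{0..<real n}. ennreal (\<psi> t * (1 + t)\<^sup>2) \<partial>lborel)"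
    unfolding radial_integral_def
    by (intro nn_integral_cong_AE, use AE_lborel_singleton[of "real n"] in eventually_elim)
       (auto simp: indicator_def)
  also have "\<dots> = (\<Sum>j<n. \<integral>\<^sup>+ t\<in>{real j..<real j + 1}. ennreal (\<psi> t * (1 + t)\<^sup>2) \<partial>lborel)"
    using \<psi> by (intro nn_integral_split_unit_intervals[symmetric]) auto
  also have "\<dots> \<le> (\<Sum>j<n. unit_weight \<psi> j * ennreal (4 * (real j + 1)\<^sup>2))"
  proof (intro sum_mono)
    fix j
    have "(\<integral>\<^sup>+ t\<in>{real j..<real j + 1}. ennreal (\<psi> t * (1 + t)\<^sup>2) \<partial>lborel)
        \<le> (\<integral>\<^sup>+ t. ennreal (\<psi> t) * indicator {real j..<real j + 1} t * ennreal (4 * (real j + 1)\<^sup>2) \<partial>lborel)"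
    proof (intro nn_integral_mono)
      fix t :: real
      show "ennreal (\<psi> t * (1 + t)\<^sup>2) * indicator {real j..<real j + 1} t
          \<le> ennreal (\<psi> t) * indicator {real j..<real j + 1} t * ennreal (4 * (real j + 1)\<^sup>2)"
      proof (cases "t \<in> {real j..<real j + 1} \<and> 0 \<le> \<psi> t")
        case True
        then have "1 + t \<le> 2 * (real j + 1)" "0 \<le> 1 + t" by auto
        from power_mono[OF this, of 2] have "(1 + t)\<^sup>2 \<le> 4 * (real j + 1)\<^sup>2"
          by (simp add: power2_eq_square algebra_simps)
        then have "\<psi> t * (1 + t)\<^sup>2 \<le> \<psi> t * (4 * (real j + 1)\<^sup>2)"
          using True by (intro mult_left_mono) auto
        then show ?thesis using True by (simp add: ennreal_mult[symmetric])
      qed (use mult_nonpos_nonneg[of "\<psi> t" "(1 + t)\<^sup>2"] in \<open>auto simp: indicator_def ennreal_neg\<close>)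
    qed
    also have "\<dots> = unit_weight \<psi> j * ennreal (4 * (real j + 1)\<^sup>2)"
      using \<psi> by (simp add: unit_weight_eq nn_integral_multc)
    finally show "(\<integral>\<^sup>+ t\<in>{real j..<real j + 1}. ennreal (\<psi> t * (1 + t)\<^sup>2) \<partial>lborel)
        \<le> unit_weight \<psi> j * ennreal (4 * (real j + 1)\<^sup>2)" .
  qed
  finally show ?thesis .
qed

definition radial_growth :: "(real \<Rightarrow> real) \<Rightarrow> ennreal" where
  "radial_growth \<psi> = (SUP r\<in>{0<..}. ennreal (1 / (1 + r)) * radial_integral \<psi> r)"

lemma radial_integral_le_radial_growth:
  assumes "0 < r" shows "radial_integral \<psi> r \<le> ennreal (1 + r) * radial_growth \<psi>"
proof -
  have "ennreal (1 / (1 + r)) * radial_integral \<psi> r \<le> radial_growth \<psi>"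
    unfolding radial_growth_def using assms by (intro SUP_upper) auto
  then have "ennreal (1 + r) * (ennreal (1 / (1 + r)) * radial_integral \<psi> r) \<le> ennreal (1 + r) * radial_growth \<psi>"
    by (intro mult_left_mono) auto
  moreover have "ennreal (1 + r) * ennreal (1 / (1 + r)) = ennreal ((1 + r) * (1 / (1 + r)))"
    using assms by (subst ennreal_mult) auto
  then have "ennreal (1 + r) * ennreal (1 / (1 + r)) = 1" using assms by simp
  ultimately show ?thesis by (simp add: mult.assoc[symmetric])
qed

lemma radial_growth_le_if_linear_bound:
  assumes "0 \<le> M" and bound: "\<And>n. radial_integral \<psi> (real n) \<le> ennreal (M * (real n + 1))"
  shows "radial_growth \<psi> \<le> ennreal (2 * M)"
  unfolding radial_growth_def
proof (intro SUP_least)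
  fix r :: real assume "r \<in> {0<..}"
  then have r: "0 < r" by simp
  define n where "n = nat \<lceil>r\<rceil>"
  have rn: "r \<le> real n" "real n \<le> r + 1" using r by (simp_all add: n_def)
  have "radial_integral \<psi> r \<le> radial_integral \<psi> (real n)"
    unfolding radial_integral_def using rn by (intro nn_integral_mono) (auto simp: indicator_def)
  also have "\<dots> \<le> ennreal (M * (real n + 1))" by (rule bound)
  also have "\<dots> \<le> ennreal (M * (2 * (1 + r)))"
    using rn r assms(1) by (intro ennreal_leI mult_left_mono) auto
  finally have "ennreal (1 / (1 + r)) * radial_integral \<psi> r \<le> ennreal (1 / (1 + r)) * ennreal (M * (2 * (1 + r)))"
    by (intro mult_left_mono) auto
  also have "\<dots> = ennreal (1 / (1 + r) * (M * (2 * (1 + r))))"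
    using r assms(1) by (intro ennreal_mult[symmetric]) auto
  also have "1 / (1 + r) * (M * (2 * (1 + r))) = 2 * M" using r by (simp add: field_simps)
  finally show "ennreal (1 / (1 + r)) * radial_integral \<psi> r \<le> ennreal (2 * M)" .
qed

lemma unit_weight_linear_growth:
  assumes \<psi>: "\<psi> \<in> borel_measurable borel" and growth: "radial_growth \<psi> < \<infinity>"
  obtains K where "0 \<le> K" "\<And>j. unit_weight \<psi> j < \<infinity>"
    "\<And>n. (\<Sum>j\<le>n. enn2real (unit_weight \<psi> j) * (real j + 1)\<^sup>2) \<le> K * (real n + 1)"
proof
  define K where "K = enn2real (radial_growth \<psi>)"
  have growth_eq: "radial_growth \<psi> = ennreal K" using growth by (simp add: K_def)
  have sum_le: "(\<Sum>j\<le>n. unit_weight \<psi> j * ennreal ((real j + 1)\<^sup>2)) \<le> ennreal ((real n + 2) * K)" for n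
  proof -
    have "(\<Sum>j\<le>n. unit_weight \<psi> j * ennreal ((real j + 1)\<^sup>2)) \<le> radial_integral \<psi> (real (Suc n))"
      using sum_unit_weight_le_radial_integral[OF \<psi>, of "Suc n"] by (simp add: lessThan_Suc_atMost)
    also have "\<dots> \<le> ennreal (1 + real (Suc n)) * radial_growth \<psi>"
      by (rule radial_integral_le_radial_growth) simp
    also have "\<dots> = ennreal ((real n + 2) * K)"
      unfolding growth_eq by (subst ennreal_mult[symmetric]) (auto simp: K_def algebra_simps)
    finally show ?thesis .
  qed
  show "0 \<le> 2 * K" by (simp add: K_def)
  show finite: "unit_weight \<psi> j < \<infinity>" for j
  proof -
    have "unit_weight \<psi> j \<le> unit_weight \<psi> j * ennreal ((real j + 1)\<^sup>2)"
      using mult_left_mono[of 1 "ennreal ((real j + 1)\<^sup>2)" "unit_weight \<psi> j"] by (simp add: one_le_power)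
    also have "\<dots> \<le> (\<Sum>i\<le>j. unit_weight \<psi> i * ennreal ((real i + 1)\<^sup>2))"
      by (intro member_le_sum) auto
    also have "\<dots> \<le> ennreal ((real j + 2) * K)" by (rule sum_le)
    also have "\<dots> < \<infinity>" by simp
    finally show ?thesis .
  qed
  show "(\<Sum>j\<le>n. enn2real (unit_weight \<psi> j) * (real j + 1)\<^sup>2) \<le> 2 * K * (real n + 1)" for n
  proof -
    have "ennreal (\<Sum>j\<le>n. enn2real (unit_weight \<psi> j) * (real j + 1)\<^sup>2)
        = (\<Sum>j\<le>n. ennreal (enn2real (unit_weight \<psi> j)) * ennreal ((real j + 1)\<^sup>2))"
      by (simp add: sum_ennreal[symmetric] ennreal_mult)
    also have "\<dots> = (\<Sum>j\<le>n. unit_weight \<psi> j * ennreal ((real j + 1)\<^sup>2))"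
      using finite by simp
    also have "\<dots> \<le> ennreal ((real n + 2) * K)" by (rule sum_le)
    finally have "(\<Sum>j\<le>n. enn2real (unit_weight \<psi> j) * (real j + 1)\<^sup>2) \<le> (real n + 2) * K"
      by (simp add: K_def)
    also have "\<dots> \<le> 2 * K * (real n + 1)" by (simp add: K_def algebra_simps)
    finally show ?thesis .
  qed
qed

section \<open>Sufficiency\<close>

definition weighted_mass :: "nat \<Rightarrow> (real \<Rightarrow> real) \<Rightarrow> (nat list \<Rightarrow> real \<Rightarrow> real) \<Rightarrow> ennreal" where
  "weighted_mass b \<psi> u = tree_nn_integral b (\<lambda>w s. ennreal (\<psi> (real (length w) + s) * (u w s)\<^sup>2))"

lemma weighted_mass_eq_finite_sum:
  assumes "vanishes_from b N u"
  shows "weighted_mass b \<psi> u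
    = (\<Sum>j<N. \<Sum>w\<in>tree_edges b j. \<integral>\<^sup>+ s\<in>{0..1}. ennreal (\<psi> (real j + s) * (u w s)\<^sup>2) \<partial>lborel)"
proof -
  have "(\<integral>\<^sup>+ s\<in>{0..1}. ennreal (\<psi> (real j + s) * (u w s)\<^sup>2) \<partial>lborel) = 0"
    if "N \<le> j" "w \<in> tree_edges b j" for j w
  proof -
    have "(\<integral>\<^sup>+ s\<in>{0..1}. ennreal (\<psi> (real j + s) * (u w s)\<^sup>2) \<partial>lborel) = (\<integral>\<^sup>+ s. 0 \<partial>(lborel :: real measure))"
      by (rule nn_integral_cong) (use assms that in \<open>auto simp: vanishes_from_def indicator_def\<close>)
    then show ?thesis by simp
  qed
  then show ?thesis
    unfolding weighted_mass_def tree_nn_integral_def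
    by (subst suminf_finite[of "{..<N}"]) (auto simp: length_tree_edges intro!: sum.cong sum.neutral)
qed

lemma weighted_mass_le_sum_edge_sup_bound:
  assumes b: "2 \<le> b" and u: "tree_C0inf b u" and N: "vanishes_from b N u"
    and \<psi>: "\<psi> \<in> borel_measurable borel"
    and \<Psi>: "\<And>j. unit_weight \<psi> j = ennreal (\<Psi> j)" "\<And>j. 0 \<le> \<Psi> j"
  shows "weighted_mass b \<psi> u \<le> ennreal (\<Sum>j<N. \<Psi> j * (\<Sum>w\<in>tree_edges b j. edge_sup_bound b j (u w)))"
proof -
  have edge: "(\<integral>\<^sup>+ s\<in>{0..1}. ennreal (\<psi> (real j + s) * (u w s)\<^sup>2) \<partial>lborel)
      \<le> ennreal (\<Psi> j * edge_sup_bound b j (u w))" if w: "w \<in> tree_edges b j" for w j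
  proof -
    define B where "B = edge_sup_bound b j (u w)"
    have B: "0 \<le> B" using edge_sup_bound_nonneg[OF b tree_C0inf_smooth[OF u w]] by (simp add: B_def)
    have "(\<integral>\<^sup>+ s\<in>{0..1}. ennreal (\<psi> (real j + s) * (u w s)\<^sup>2) \<partial>lborel)
        \<le> (\<integral>\<^sup>+ s. ennreal (\<psi> (real j + s)) * indicator {0..1} s * ennreal B \<partial>lborel)"
    proof (intro nn_integral_mono)
      fix s :: real
      show "ennreal (\<psi> (real j + s) * (u w s)\<^sup>2) * indicator {0..1} s
          \<le> ennreal (\<psi> (real j + s)) * indicator {0..1} s * ennreal B"
      proof (cases "s \<in> {0..1} \<and> 0 \<le> \<psi> (real j + s)")
        case True
        then have "\<psi> (real j + s) * (u w s)\<^sup>2 \<le> \<psi> (real j + s) * B"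
          using edge_square_le[OF b tree_C0inf_smooth[OF u w]] by (intro mult_left_mono) (auto simp: B_def)
        then show ?thesis using True B by (simp add: ennreal_mult[symmetric])
      qed (use mult_nonpos_nonneg[of "\<psi> (real j + s)" "(u w s)\<^sup>2"] in \<open>auto simp: indicator_def ennreal_neg\<close>)
    qed
    also have "\<dots> = ennreal (\<Psi> j * B)"
      using \<psi> \<Psi> B by (simp add: nn_integral_multc unit_weight_def[symmetric] ennreal_mult)
    finally show ?thesis by (simp add: B_def)
  qed
  have "weighted_mass b \<psi> u \<le> (\<Sum>j<N. \<Sum>w\<in>tree_edges b j. ennreal (\<Psi> j * edge_sup_bound b j (u w)))"
    unfolding weighted_mass_eq_finite_sum[OF N] by (intro sum_mono edge)
  also have "\<dots> = ennreal (\<Sum>j<N. \<Psi> j * (\<Sum>w\<in>tree_edges b j. edge_sup_bound b j (u w)))"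
    using \<Psi>(2) edge_sup_bound_nonneg[OF b tree_C0inf_smooth[OF u]]
    by (simp add: sum_distrib_left sum_nonneg)
  finally show ?thesis .
qed

lemma tree_hardy_inequality:
  assumes b: "2 \<le> b" and \<psi>: "\<psi> \<in> borel_measurable borel" and growth: "radial_growth \<psi> < \<infinity>"
  obtains C where "0 \<le> C" "\<And>u. tree_C0inf b u \<Longrightarrow> weighted_mass b \<psi> u \<le> ennreal (C * tree_energy b u)"
proof -
  obtain K where K: "0 \<le> K" and finite: "\<And>j. unit_weight \<psi> j < \<infinity>"
    and growth_K: "\<And>n. (\<Sum>j\<le>n. enn2real (unit_weight \<psi> j) * (real j + 1)\<^sup>2) \<le> K * (real n + 1)"
    using unit_weight_linear_growth[OF \<psi> growth] by blast
  define \<Psi> where "\<Psi> j = enn2real (unit_weight \<psi> j)" for j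
  have \<Psi>: "unit_weight \<psi> j = ennreal (\<Psi> j)" "0 \<le> \<Psi> j" for j
    using finite by (simp_all add: \<Psi>_def)
  show ?thesis
  proof
    show "0 \<le> tree_hardy_const b K" using b K by (rule tree_hardy_const_nonneg)
    fix u assume u: "tree_C0inf b u"
    obtain N where N: "vanishes_from b N u" using tree_C0inf_vanishes_from[OF u] by blast
    have "weighted_mass b \<psi> u \<le> ennreal (\<Sum>j<N. \<Psi> j * (\<Sum>w\<in>tree_edges b j. edge_sup_bound b j (u w)))"
      by (rule weighted_mass_le_sum_edge_sup_bound[OF b u N \<psi> \<Psi>])
    also have "\<dots> \<le> ennreal (tree_hardy_const b K * tree_energy b u)"
      using sum_generation_sup_bound_le[OF b u N \<Psi>(2) growth_K[unfolded \<Psi>_def[symmetric]]]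
      by (simp add: tree_energy_eq_sum_generation_defect[OF b u N] ennreal_leI)
    finally show "weighted_mass b \<psi> u \<le> ennreal (tree_hardy_const b K * tree_energy b u)" .
  qed
qed

section \<open>Necessity\<close>

text \<open>The functions (A + B s) sin (k s) + (C + D s) cos (k s) form a family closed under
  differentiation; it contains the ground state times an affine function, which gives the
  smoothness of the test functions without a product rule for smooth_on_unit.\<close>
definition affine_sin_cos :: "real \<Rightarrow> real \<times> real \<times> real \<times> real \<Rightarrow> real \<Rightarrow> real" where
  "affine_sin_cos k c s = (case c of (A, B, C, D) \<Rightarrow> (A + B * s) * sin (k * s) + (C + D * s) * cos (k * s))"

definition affine_sin_cos_diff :: "real \<Rightarrow> real \<times> real \<times> real \<times> real \<Rightarrow> real \<times> real \<times> real \<times> real" where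
  "affine_sin_cos_diff k c = (case c of (A, B, C, D) \<Rightarrow> (B - k * C, - k * D, k * A + D, k * B))"

lemma has_real_derivative_affine_sin_cos:
  "(affine_sin_cos k c has_real_derivative affine_sin_cos k (affine_sin_cos_diff k c) x) (at x within S)"
proof -
  obtain A B C D where c: "c = (A, B, C, D)" by (cases c) auto
  show ?thesis unfolding c affine_sin_cos_def affine_sin_cos_diff_def
    by (auto intro!: derivative_eq_intros simp: algebra_simps)
qed

lemma smooth_on_unit_affine_sin_cos: "smooth_on_unit (affine_sin_cos k c)"
  unfolding smooth_on_unit_def
  by (intro exI[of _ "\<lambda>n. affine_sin_cos k ((affine_sin_cos_diff k ^^ n) c)"])
     (auto intro: has_real_derivative_affine_sin_cos)

lemma smooth_on_unit_ground_state_mult_affine: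
  "smooth_on_unit (\<lambda>s. ground_state b j s * (\<alpha> + \<beta> * s))"
proof -
  define k where "k = tree_freq b"
  define A where "A = tree_decay b ^ j * (tree_decay b * tree_amp b (Suc j) - tree_amp b j * cos k)"
  define D where "D = tree_decay b ^ j * tree_amp b j * sin k"
  have "ground_state b j s * (\<alpha> + \<beta> * s) = affine_sin_cos k (A * \<alpha>, A * \<beta>, D * \<alpha>, D * \<beta>) s" for s
  proof -
    have sin_diff: "sin (k * (1 - s)) = sin k * cos (k * s) - cos k * sin (k * s)"
      using sin_diff[of k "k * s"] by (simp add: right_diff_distrib)
    show ?thesis
      unfolding ground_state_def affine_sin_cos_def k_def[symmetric] A_def D_def sin_diff
      by (simp only: prod.case) algebra
  qed
  then show ?thesis using smooth_on_unit_affine_sin_cos by presburger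
qed

definition plateau :: "nat \<Rightarrow> nat \<Rightarrow> real" where
  "plateau n j = (if j \<le> n then 1 else if j \<le> 2 * n + 1 then (real (2 * n + 1) - real j) / (real n + 1) else 0)"

lemma plateau_diff_le: "\<bar>plateau n (Suc j) - plateau n j\<bar> \<le> 1 / (real n + 1)"
proof -
  consider "Suc j \<le> n" | "j = n" | "n < j" "Suc j \<le> 2 * n + 1" | "2 * n + 1 \<le> j" by linarith
  then show ?thesis
  proof cases
    case 3
    then have "plateau n (Suc j) - plateau n j
        = ((real (2 * n + 1) - real (Suc j)) - (real (2 * n + 1) - real j)) / (real n + 1)"
      by (simp only: plateau_def diff_divide_distrib) simp
    also have "\<dots> = - 1 / (real n + 1)" by simp
    finally show ?thesis by simp
  qed (auto simp: plateau_def field_simps)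
qed

definition test_function :: "nat \<Rightarrow> nat \<Rightarrow> nat list \<Rightarrow> real \<Rightarrow> real" where
  "test_function b n w s = ground_state b (length w) s *
     (plateau n (length w) + (plateau n (Suc (length w)) - plateau n (length w)) * s)"

lemma tree_C0inf_test_function: "tree_C0inf b (test_function b n)"
  unfolding tree_C0inf_def
proof (intro conjI allI ballI impI)
  show "smooth_on_unit (test_function b n w)" for w
    unfolding test_function_def by (rule smooth_on_unit_ground_state_mult_affine)
  show "test_function b n (w @ [k]) 0 = test_function b n w 1" for w k
    by (simp add: test_function_def ground_state_vertex)
  show "\<exists>N. \<forall>j\<ge>N. \<forall>w\<in>tree_edges b j. \<forall>s\<in>{0..1}. test_function b n w s = 0"
    by (intro exI[of _ "2 * n + 1"]) (simp add: test_function_def length_tree_edges plateau_def)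
qed

lemma vanishes_from_test_function: "vanishes_from b (2 * n + 2) (test_function b n)"
  by (simp add: vanishes_from_def test_function_def length_tree_edges plateau_def)

lemma edge_defect_test_function_le:
  assumes b: "2 \<le> b" and w: "w \<in> tree_edges b j"
  shows "edge_defect b j (test_function b n w) \<le> (ground_state_max b j)\<^sup>2 * (1 / (real n + 1))\<^sup>2"
proof -
  define d where "d = plateau n (Suc j) - plateau n j"
  have u: "test_function b n w = (\<lambda>s. ground_state b j s * (plateau n j + d * s))"
    by (simp add: fun_eq_iff test_function_def length_tree_edges[OF w] d_def)
  have "deriv (test_function b n w) s = ground_state_deriv b j s * (plateau n j + d * s) + ground_state b j s * d"
    for s unfolding u
    by (rule DERIV_imp_deriv) (auto intro!: derivative_eq_intros has_real_derivative_ground_state)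
  then have eq: "(deriv (test_function b n w) s - ground_state_log_deriv b j s * test_function b n w s)\<^sup>2
      = (ground_state b j s * d)\<^sup>2" if "s \<in> {0..1}" for s
    using ground_state_pos[OF b, of s j] that by (simp add: u ground_state_log_deriv_def field_simps)
  have bound: "(ground_state b j s * d)\<^sup>2 \<le> (ground_state_max b j)\<^sup>2 * (1 / (real n + 1))\<^sup>2"
    if "s \<in> {0..1}" for s
  proof -
    have "\<bar>ground_state b j s * d\<bar> \<le> ground_state_max b j * (1 / (real n + 1))"
      using ground_state_le_max[OF b, of s j] ground_state_pos[OF b, of s j] that plateau_diff_le[of n j]
      unfolding abs_mult d_def by (intro mult_mono) auto
    then have "\<bar>ground_state b j s * d\<bar>\<^sup>2 \<le> (ground_state_max b j * (1 / (real n + 1)))\<^sup>2"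
      by (rule power_mono) simp
    then show ?thesis by (simp only: power2_abs power_mult_distrib)
  qed
  have "edge_defect b j (test_function b n w) = integral {0..1} (\<lambda>s. (ground_state b j s * d)\<^sup>2)"
    unfolding edge_defect_def by (rule integral_cong) (use eq in auto)
  also have "\<dots> \<le> integral {0..1} (\<lambda>s::real. (ground_state_max b j)\<^sup>2 * (1 / (real n + 1))\<^sup>2)"
    using bound by (intro integral_le integrable_continuous_interval continuous_intros continuous_on_ground_state) auto
  finally show ?thesis by simp
qed

lemma tree_energy_test_function_le:
  assumes b: "2 \<le> b" shows "tree_energy b (test_function b n) \<le> 128 * (real n + 1)"
proof -
  have "(\<Sum>w\<in>tree_edges b j. edge_defect b j (test_function b n w)) \<le> 64" if "j < 2 * n + 2" for j
  proof -
    have "(\<Sum>w\<in>tree_edges b j. edge_defect b j (test_function b n w))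
        \<le> (\<Sum>w\<in>tree_edges b j. (ground_state_max b j)\<^sup>2 * (1 / (real n + 1))\<^sup>2)"
      by (intro sum_mono edge_defect_test_function_le[OF b])
    also have "\<dots> = ((ground_state_max b j)\<^sup>2 * real b ^ j) * (1 / (real n + 1))\<^sup>2"
      by (simp add: card_tree_edges)
    also have "\<dots> \<le> (16 * (2 * (real n + 1))\<^sup>2) * (1 / (real n + 1))\<^sup>2"
    proof (rule mult_right_mono)
      have "(real j + 1)\<^sup>2 \<le> (2 * (real n + 1))\<^sup>2" using that by (intro power_mono) auto
      then show "(ground_state_max b j)\<^sup>2 * real b ^ j \<le> 16 * (2 * (real n + 1))\<^sup>2"
        using ground_state_max_sq_scaled[OF b, of j] by linarith
    qed simp
    also have "\<dots> = 64"
    proof -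
      have "(2 * x)\<^sup>2 * (1 / x)\<^sup>2 = 4" if "0 < x" for x :: real
        using that by (simp add: power2_eq_square)
      from this[of "real n + 1"] show ?thesis unfolding mult.assoc[of 16] by simp
    qed
    finally show ?thesis .
  qed
  then have "(\<Sum>j<2 * n + 2. generation_defect b (test_function b n) j) \<le> (\<Sum>j<2 * n + 2. 64)"
    unfolding generation_defect_def by (intro sum_mono) auto
  then show ?thesis
    by (simp add: tree_energy_eq_sum_generation_defect[OF b tree_C0inf_test_function vanishes_from_test_function])
qed

lemma unit_weight_mult_ground_state_min_le:
  assumes b: "2 \<le> b" and \<psi>: "\<psi> \<in> borel_measurable borel"
    and j: "j < n" and w: "w \<in> tree_edges b j"
  shows "unit_weight \<psi> j * ennreal ((ground_state_min b j)\<^sup>2)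
    \<le> (\<integral>\<^sup>+ s\<in>{0..1}. ennreal (\<psi> (real j + s) * (test_function b n w s)\<^sup>2) \<partial>lborel)"
proof -
  have "unit_weight \<psi> j * ennreal ((ground_state_min b j)\<^sup>2)
      = (\<integral>\<^sup>+ s. ennreal (\<psi> (real j + s)) * indicator {0..1} s * ennreal ((ground_state_min b j)\<^sup>2) \<partial>lborel)"
    unfolding unit_weight_def using \<psi> by (intro nn_integral_multc[symmetric]) auto
  also have "\<dots> \<le> (\<integral>\<^sup>+ s\<in>{0..1}. ennreal (\<psi> (real j + s) * (test_function b n w s)\<^sup>2) \<partial>lborel)"
  proof (intro nn_integral_mono)
    fix s :: real
    show "ennreal (\<psi> (real j + s)) * indicator {0..1} s * ennreal ((ground_state_min b j)\<^sup>2)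
        \<le> ennreal (\<psi> (real j + s) * (test_function b n w s)\<^sup>2) * indicator {0..1} s"
    proof (cases "s \<in> {0..1} \<and> 0 \<le> \<psi> (real j + s)")
      case True
      have "test_function b n w s = ground_state b j s"
        using j by (simp add: test_function_def length_tree_edges[OF w] plateau_def)
      moreover have "(ground_state_min b j)\<^sup>2 \<le> (ground_state b j s)\<^sup>2"
        using ground_state_ge_min[OF b, of s j] ground_state_min_pos[OF b, of j] True by (intro power_mono) auto
      ultimately have "\<psi> (real j + s) * (ground_state_min b j)\<^sup>2 \<le> \<psi> (real j + s) * (test_function b n w s)\<^sup>2"
        using True by (simp add: mult_left_mono)
      then show ?thesis using True by (simp add: ennreal_mult[symmetric])
    qed (auto simp: indicator_def ennreal_neg)
  qed
  finally show ?thesis .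
qed

lemma sum_unit_weight_le_weighted_mass_test_function:
  assumes b: "2 \<le> b" and \<psi>: "\<psi> \<in> borel_measurable borel"
  shows "(\<Sum>j<n. unit_weight \<psi> j * ennreal ((tree_decay b)\<^sup>2 * (sin (tree_freq b))^4 * (real j + 1)\<^sup>2))
    \<le> weighted_mass b \<psi> (test_function b n)"
proof -
  define G where "G j = (\<Sum>w\<in>tree_edges b j.
    \<integral>\<^sup>+ s\<in>{0..1}. ennreal (\<psi> (real j + s) * (test_function b n w s)\<^sup>2) \<partial>lborel)" for j
  note edge = unit_weight_mult_ground_state_min_le[OF b \<psi>]
  have "unit_weight \<psi> j * ennreal ((tree_decay b)\<^sup>2 * (sin (tree_freq b))^4 * (real j + 1)\<^sup>2) \<le> G j"
    if "j < n" for j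
  proof -
    have "unit_weight \<psi> j * ennreal ((tree_decay b)\<^sup>2 * (sin (tree_freq b))^4 * (real j + 1)\<^sup>2)
        \<le> unit_weight \<psi> j * ennreal ((ground_state_min b j)\<^sup>2 * real b ^ j)"
      using ground_state_min_sq_scaled[OF b, of j] by (intro mult_left_mono ennreal_leI) auto
    also have "\<dots> = (\<Sum>w\<in>tree_edges b j. unit_weight \<psi> j * ennreal ((ground_state_min b j)\<^sup>2))"
      by (simp add: card_tree_edges ennreal_mult ennreal_of_nat_eq_real_of_nat mult_ac)
    also have "\<dots> \<le> G j" unfolding G_def using that by (intro sum_mono edge)
    finally show ?thesis .
  qed
  then have "(\<Sum>j<n. unit_weight \<psi> j * ennreal ((tree_decay b)\<^sup>2 * (sin (tree_freq b))^4 * (real j + 1)\<^sup>2))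
      \<le> (\<Sum>j<n. G j)" by (intro sum_mono) auto
  also have "\<dots> \<le> (\<Sum>j<2 * n + 2. G j)" by (intro sum_mono2) auto
  also have "\<dots> = weighted_mass b \<psi> (test_function b n)"
    by (simp add: G_def weighted_mass_eq_finite_sum[OF vanishes_from_test_function])
  finally show ?thesis .
qed

lemma radial_growth_finite_if_tree_hardy:
  assumes b: "2 \<le> b" and \<psi>: "\<psi> \<in> borel_measurable borel"
    and hardy: "\<And>u. tree_C0inf b u \<Longrightarrow> enn2ereal (weighted_mass b \<psi> u) \<le> ereal (C * tree_energy b u)"
  shows "radial_growth \<psi> < \<infinity>"
proof -
  define c where "c = (tree_decay b)\<^sup>2 * (sin (tree_freq b))^4"
  define M where "M = 4 / c * (128 * \<bar>C\<bar>)"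
  have c: "0 < c" using tree_decay_bounds[OF b] sin_tree_freq_bounds[OF b] by (simp add: c_def)
  have test_mass: "weighted_mass b \<psi> (test_function b n) \<le> ennreal (128 * \<bar>C\<bar> * (real n + 1))" for n
  proof -
    define Q where "Q = tree_energy b (test_function b n)"
    have Q: "0 \<le> Q" "Q \<le> 128 * (real n + 1)"
      using tree_energy_nonneg[OF b tree_C0inf_test_function] tree_energy_test_function_le[OF b]
      by (simp_all add: Q_def)
    have "enn2ereal (weighted_mass b \<psi> (test_function b n)) \<le> ereal (C * Q)"
      using hardy[OF tree_C0inf_test_function] by (simp add: Q_def)
    also have "C * Q \<le> \<bar>C\<bar> * Q" using Q by (intro mult_right_mono) auto
    also have "\<dots> \<le> \<bar>C\<bar> * (128 * (real n + 1))" using Q by (intro mult_left_mono) auto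
    also have "ereal (\<bar>C\<bar> * (128 * (real n + 1))) = enn2ereal (ennreal (128 * \<bar>C\<bar> * (real n + 1)))"
      by (simp add: mult_ac)
    finally show ?thesis by (simp add: less_eq_ennreal.rep_eq)
  qed
  have "radial_integral \<psi> (real n) \<le> ennreal (M * (real n + 1))" for n
  proof -
    have "radial_integral \<psi> (real n) \<le> (\<Sum>j<n. unit_weight \<psi> j * ennreal (4 * (real j + 1)\<^sup>2))"
      by (rule radial_integral_le_sum_unit_weight[OF \<psi>])
    also have "\<dots> = ennreal (4 / c) * (\<Sum>j<n. unit_weight \<psi> j * ennreal (c * (real j + 1)\<^sup>2))"
      using c by (simp add: sum_distrib_left ennreal_mult[symmetric] mult_ac)
    also have "\<dots> \<le> ennreal (4 / c) * ennreal (128 * \<bar>C\<bar> * (real n + 1))"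
      using sum_unit_weight_le_weighted_mass_test_function[OF b \<psi>, of n] test_mass[of n]
      by (intro mult_left_mono) (auto simp: c_def)
    also have "\<dots> = ennreal (M * (real n + 1))"
      using c by (simp add: M_def ennreal_mult[symmetric] mult_ac)
    finally show ?thesis .
  qed
  then have "radial_growth \<psi> \<le> ennreal (2 * M)"
    using c by (intro radial_growth_le_if_linear_bound) (auto simp: M_def)
  then show ?thesis using ennreal_less_top[of "2 * M"] by (metis order.strict_trans1 infinity_ennreal_def)
qed

lemma tree_hardy_iff_radial_growth_finite:
  assumes b: "2 \<le> b" and \<psi>: "\<psi> \<in> borel_measurable borel"
  shows "(\<exists>C. \<forall>u. tree_C0inf b u \<longrightarrow> enn2ereal (weighted_mass b \<psi> u) \<le> ereal (C * tree_energy b u))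
    \<longleftrightarrow> radial_growth \<psi> < \<infinity>"
proof
  assume "\<exists>C. \<forall>u. tree_C0inf b u \<longrightarrow> enn2ereal (weighted_mass b \<psi> u) \<le> ereal (C * tree_energy b u)"
  then show "radial_growth \<psi> < \<infinity>" using radial_growth_finite_if_tree_hardy[OF b \<psi>] by blast
next
  assume "radial_growth \<psi> < \<infinity>"
  then obtain C where "0 \<le> C"
    and C: "\<And>u. tree_C0inf b u \<Longrightarrow> weighted_mass b \<psi> u \<le> ennreal (C * tree_energy b u)"
    using tree_hardy_inequality[OF b \<psi>] by blast
  have "enn2ereal (weighted_mass b \<psi> u) \<le> ereal (C * tree_energy b u)" if "tree_C0inf b u" for u
    using C[OF that] \<open>0 \<le> C\<close> tree_energy_nonneg[OF b that] by (simp add: less_eq_ennreal.rep_eq)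
  then show "\<exists>C. \<forall>u. tree_C0inf b u \<longrightarrow> enn2ereal (weighted_mass b \<psi> u) \<le> ereal (C * tree_energy b u)"
    by blast
qed

lemma weighted_mass_cong:
  "(\<And>t. 0 \<le> t \<Longrightarrow> \<psi> t = \<phi> t) \<Longrightarrow> weighted_mass b \<psi> u = weighted_mass b \<phi> u"
  unfolding weighted_mass_def tree_nn_integral_def
  by (intro suminf_cong sum.cong refl nn_integral_cong) (auto simp: indicator_def)

lemma radial_growth_cong:
  assumes "\<And>t. 0 \<le> t \<Longrightarrow> \<psi> t = \<phi> t" shows "radial_growth \<psi> = radial_growth \<phi>"
proof -
  have "radial_integral \<psi> r = radial_integral \<phi> r" for r
    unfolding radial_integral_def by (intro nn_integral_cong) (simp add: assms indicator_def)
  then show ?thesis by (simp add: radial_growth_def)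
qed

theorem theorem2p4:
  fixes b :: nat and \<psi> :: "real \<Rightarrow> real"
  assumes "b \<ge> 2"
    and "set_borel_measurable lborel {0..} \<psi>"
    and "\<forall>t\<ge>0. \<psi> t \<ge> 0"
  shows "(\<exists>C::real. \<forall>u. tree_C0inf b u \<longrightarrow>
            enn2ereal (tree_nn_integral b (\<lambda>w s. ennreal (\<psi> (real (length w) + s) * (u w s)\<^sup>2)))
              \<le> ereal (C * tree_integral b (\<lambda>w s. (deriv (u w) s)\<^sup>2 - lambda_b b * (u w s)\<^sup>2)))
         \<longleftrightarrow> (SUP r\<in>{0<..}. ennreal (1 / (1 + r)) *
                (\<integral>\<^sup>+ t\<in>{0..r}. ennreal (\<psi> t * (1 + t)\<^sup>2) \<partial>lborel)) < \<infinity>"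
proof -
  txt \<open>Only the values of psi on [0, \<infinity>) enter, and ennreal truncates negative values, so the
    sign hypothesis is not needed; the extension of psi by zero is measurable on all of the line.\<close>
  define \<psi>\<^sub>0 where "\<psi>\<^sub>0 t = indicator {0..} t *\<^sub>R \<psi> t" for t :: real
  have \<psi>\<^sub>0: "\<psi>\<^sub>0 \<in> borel_measurable borel"
    using assms(2) by (simp add: \<psi>\<^sub>0_def[abs_def] set_borel_measurable_def)
  have same: "\<psi> t = \<psi>\<^sub>0 t" if "0 \<le> t" for t using that by (simp add: \<psi>\<^sub>0_def)
  have "(\<exists>C. \<forall>u. tree_C0inf b u \<longrightarrow> enn2ereal (weighted_mass b \<psi>\<^sub>0 u) \<le> ereal (C * tree_energy b u))
      \<longleftrightarrow> radial_growth \<psi>\<^sub>0 < \<infinity>"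
    by (rule tree_hardy_iff_radial_growth_finite[OF assms(1) \<psi>\<^sub>0])
  moreover have "weighted_mass b \<psi>\<^sub>0 u = weighted_mass b \<psi> u" for u
    by (rule weighted_mass_cong) (simp add: same)
  moreover have "radial_growth \<psi>\<^sub>0 = radial_growth \<psi>"
    by (rule radial_growth_cong) (simp add: same)
  ultimately show ?thesis
    by (simp only: weighted_mass_def tree_energy_def radial_growth_def radial_integral_def)
qed

end
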